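(* Let $d \geq 0$ and $r \geq 2$ be integers. If $G$ is a graph of maximum degree at most $d$ satisfying $\chi(G) \leq r$, then \[\chi_P(G) \leq AT(G) \leq \left(1 - \frac{1}{4r+1}\right) d + 2.\]
   Context: All graphs are finite and simple. $\chi(G)$ is the chromatic number. Paintability: given $f:V(G)\to\mathbb N$, in the $f$-painting game each vertex $v$ starts with $f(v)$ tokens. On each turn $i$, Lister removes at most one token from each vertex, letting $S_i$ be the (nonempty) set of vertices that lost a token; Painter then colors an independent subset of $S_i$ with color $i$ (a vertex once colored stays colored). The game ends when all tokens are gone; Painter wins if every vertex has been colored. $G$ is $f$-paintable if Painter has a winning strategy; $\chi_P(G)$ is the minimum $k$ such that $G$ is $f$-paintable for the constant function $f\equiv k$. Alon–Tarsi number: for an orientation $\vec G$ of $G$, a spanning subgraph $\vec H$ (same vertex set) is Eulerian if $\deg^+_{\vec H}(v)=\deg^-_{\vec H}(v)$ for all $v$; it is even or odd according to the parity of $|E(\vec H)|$. Let $EE(\vec G)$, $EO(\vec G)$ be the numbers of even and odd Eulerian subgraphs. $\vec G$ is an Alon–Tarsi orientation if $EE(\vec G)\neq EO(\vec G)$. $AT(G)$ is the minimum $k$ such that $G$ has an Alon–Tarsi orientation with $\deg^+(v) < k$ for every vertex $v$. *)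

theory Defs
  imports Complex_Main
begin

definition simple_graph :: "'a set \<Rightarrow> 'a set set \<Rightarrow> bool" where
  "simple_graph V E \<longleftrightarrow> finite V \<and> (\<forall>e\<in>E. \<exists>u v. e = {u, v} \<and> u \<in> V \<and> v \<in> V \<and> u \<noteq> v)"

definition degree :: "'a set \<Rightarrow> 'a set set \<Rightarrow> 'a \<Rightarrow> nat" where
  "degree V E v = card {u\<in>V. {u, v} \<in> E}"

definition max_degree_le :: "'a set \<Rightarrow> 'a set set \<Rightarrow> nat \<Rightarrow> bool" where
  "max_degree_le V E d \<longleftrightarrow> (\<forall>v\<in>V. degree V E v \<le> d)"

definition proper_coloring :: "'a set \<Rightarrow> 'a set set \<Rightarrow> ('a \<Rightarrow> nat) \<Rightarrow> nat \<Rightarrow> bool" where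
  "proper_coloring V E c k \<longleftrightarrow> (\<forall>v\<in>V. c v < k) \<and> (\<forall>u v. {u, v} \<in> E \<longrightarrow> c u \<noteq> c v)"

definition chromatic_number :: "'a set \<Rightarrow> 'a set set \<Rightarrow> nat" where
  "chromatic_number V E = (LEAST k. \<exists>c. proper_coloring V E c k)"

definition independent :: "'a set set \<Rightarrow> 'a set \<Rightarrow> bool" where
  "independent E I \<longleftrightarrow> (\<forall>u\<in>I. \<forall>v\<in>I. {u, v} \<notin> E)"

text \<open>State: set C of already coloured vertices and token function f.
  painter_wins V E C f: Painter has a winning strategy from this state.
  The game is finite (total token count strictly decreases), so the inductive
  (least fixed point) reading is exactly "Painter has a winning strategy".\<close>
inductive painter_wins :: "'a set \<Rightarrow> 'a set set \<Rightarrow> 'a set \<Rightarrow> ('a \<Rightarrow> nat) \<Rightarrow> bool"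
  for V :: "'a set" and E :: "'a set set" where
  game_over: "(\<forall>v\<in>V. f v = 0) \<Longrightarrow> V \<subseteq> C \<Longrightarrow> painter_wins V E C f"
| step: "(\<exists>v\<in>V. 0 < f v) \<Longrightarrow>
    (\<forall>S. S \<noteq> {} \<and> S \<subseteq> {v\<in>V. 0 < f v} \<longrightarrow>
        (\<exists>I. I \<subseteq> S \<and> independent E I \<and>
             painter_wins V E (C \<union> I) (\<lambda>v. if v \<in> S then f v - 1 else f v))) \<Longrightarrow>
    painter_wins V E C f"

definition f_paintable :: "'a set \<Rightarrow> 'a set set \<Rightarrow> ('a \<Rightarrow> nat) \<Rightarrow> bool" where
  "f_paintable V E f \<longleftrightarrow> painter_wins V E {} f"

definition paint_number :: "'a set \<Rightarrow> 'a set set \<Rightarrow> nat" where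
  "paint_number V E = (LEAST k. f_paintable V E (\<lambda>_. k))"

definition orientation :: "'a set set \<Rightarrow> ('a \<times> 'a) set \<Rightarrow> bool" where
  "orientation E D \<longleftrightarrow> (\<forall>(u, v)\<in>D. {u, v} \<in> E) \<and>
     (\<forall>u v. {u, v} \<in> E \<longrightarrow> ((u, v) \<in> D \<longleftrightarrow> (v, u) \<notin> D))"

definition outdeg :: "('a \<times> 'a) set \<Rightarrow> 'a \<Rightarrow> nat" where
  "outdeg D v = card {u. (v, u) \<in> D}"

definition indeg :: "('a \<times> 'a) set \<Rightarrow> 'a \<Rightarrow> nat" where
  "indeg D v = card {u. (u, v) \<in> D}"

text \<open>Spanning Eulerian subgraphs of an oriented graph (given by its arc set; spanning means
  same vertex set, so they are determined by their arc subsets).\<close>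
definition eulerian_subgraphs :: "'a set \<Rightarrow> ('a \<times> 'a) set \<Rightarrow> ('a \<times> 'a) set set" where
  "eulerian_subgraphs V D = {H. H \<subseteq> D \<and> (\<forall>v\<in>V. outdeg H v = indeg H v)}"

definition EE :: "'a set \<Rightarrow> ('a \<times> 'a) set \<Rightarrow> nat" where
  "EE V D = card {H \<in> eulerian_subgraphs V D. even (card H)}"

definition EO :: "'a set \<Rightarrow> ('a \<times> 'a) set \<Rightarrow> nat" where
  "EO V D = card {H \<in> eulerian_subgraphs V D. odd (card H)}"

definition AT_orientation :: "'a set \<Rightarrow> ('a \<times> 'a) set \<Rightarrow> bool" where
  "AT_orientation V D \<longleftrightarrow> EE V D \<noteq> EO V D"

definition AT_number :: "'a set \<Rightarrow> 'a set set \<Rightarrow> nat" where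
  "AT_number V E = (LEAST k. \<exists>D. orientation E D \<and> AT_orientation V D \<and> (\<forall>v\<in>V. outdeg D v < k))"

end

theory Submission
  imports Defs
begin

(* Painter wins the f-painting game as soon as the graph polynomial \<Prod>(x_u - x_v) has a nonzero
   coefficient at an exponent vector t < f (Schauz). When Lister moves on S, an inclusion-exclusion
   over the subsets J of S produces an independent J to color such that the polynomial of the
   uncolored graph again has a nonzero coefficient below the remaining tokens. For an orientation
   the coefficient at its out-degree vector is EE - EO, so an Alon-Tarsi orientation with out-degrees
   below k makes the graph k-paintable.

   For the upper bound put c = (1 - 1/(4r+1)) d and peel the vertex set: from the remaining set U
   remove a nonempty P inside two color classes in which each vertex v keeps at least
   2 (deg_U v - c) - 1 neighbors. Such a P exists: otherwise the subgraph on every pair of color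
   classes is degenerate with respect to these bounds, and summing the resulting edge counts over
   all r^2 ordered pairs of colors contradicts (2r - 1) (2 (x - c) - 1) <= x for all x <= d.
   Orient the edges inside P with out-degrees at most (deg_P + 1) / 2 and all edges from P to the
   rest of U away from P; then every out-degree is at most c + 1. Arcs never return to an earlier
   layer, and inside a layer they join the two color classes, so every Eulerian subgraph has an
   even number of arcs: EO = 0 < EE. *)

section \<open>Simple graphs and orientations\<close>

lemma sum_card_fibers:
  assumes "finite A" "finite W" "f ` A \<subseteq> W"
  shows "(\<Sum>v\<in>W. card {e\<in>A. f e = v}) = card A"
proof -
  have "A = (\<Union>v\<in>W. {e\<in>A. f e = v})" using assms(3) by auto
  then have "card A = card (\<Union>v\<in>W. {e\<in>A. f e = v})" by simp
  also have "\<dots> = (\<Sum>v\<in>W. card {e\<in>A. f e = v})"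
    by (rule card_UN_disjoint) (use assms in auto)
  finally show ?thesis by simp
qed

lemma card_filter_eq_sum: "finite A \<Longrightarrow> card {x\<in>A. P x} = (\<Sum>x\<in>A. if P x then 1 else 0)"
  using sum.inter_filter[of A "\<lambda>_. 1::nat" P, symmetric] by simp

lemma simple_graph_edgeE:
  assumes "simple_graph V E" "e \<in> E"
  obtains u v where "e = {u, v}" "u \<in> V" "v \<in> V" "u \<noteq> v"
  using assms unfolding simple_graph_def by blast

lemma simple_graph_edgeD:
  assumes "simple_graph V E" "{u, v} \<in> E"
  shows "u \<in> V" "v \<in> V" "u \<noteq> v"
proof -
  obtain a b where "{u, v} = {a, b}" "a \<in> V" "b \<in> V" "a \<noteq> b"
    using assms unfolding simple_graph_def by blast
  then show "u \<in> V" "v \<in> V" "u \<noteq> v" by (auto simp: doubleton_eq_iff)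
qed

lemma simple_graph_no_loops:
  assumes "simple_graph V E"
  shows "{u} \<notin> E"
proof
  assume "{u} \<in> E"
  then obtain a b where "{u} = {a, b}" "a \<noteq> b" using assms unfolding simple_graph_def by blast
  then show False by (metis doubleton_eq_iff insert_absorb2)
qed

lemma simple_graph_finite_edges:
  assumes "simple_graph V F"
  shows "finite F"
proof -
  have "F \<subseteq> Pow V" using assms by (auto simp: simple_graph_def)
  then show ?thesis using assms by (meson finite_Pow_iff finite_subset simple_graph_def)
qed

lemma simple_graph_subset:
  assumes "simple_graph V F" "F' \<subseteq> F"
  shows "simple_graph V F'"
  using assms by (auto simp: simple_graph_def)

lemma simple_graph_insert_edge:
  assumes "simple_graph V F" "x \<in> V" "y \<in> V" "x \<noteq> y"
  shows "simple_graph V (insert {x, y} F)"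
  using assms by (auto simp: simple_graph_def)

lemma simple_graph_induced:
  assumes "simple_graph V E" "P \<subseteq> V"
  shows "simple_graph P {e\<in>E. e \<subseteq> P}"
  unfolding simple_graph_def
proof (intro conjI ballI)
  show "finite P" using assms finite_subset unfolding simple_graph_def by blast
  fix e assume e: "e \<in> {e\<in>E. e \<subseteq> P}"
  then have "e \<in> E" by simp
  then obtain u v where "e = {u, v}" "u \<noteq> v" using simple_graph_edgeE[OF assms(1)] by metis
  with e show "\<exists>u v. e = {u, v} \<and> u \<in> P \<and> v \<in> P \<and> u \<noteq> v" by auto
qed

lemma degree_mono:
  assumes "U \<subseteq> V" "finite V"
  shows "degree U E v \<le> degree V E v"
  unfolding degree_def using assms by (intro card_mono) auto

lemma degree_Un:
  assumes "P \<inter> U = {}" "finite P" "finite U"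
  shows "degree (P \<union> U) E z = degree P E z + degree U E z"
proof -
  have "{u\<in>P \<union> U. {u, z} \<in> E} = {u\<in>P. {u, z} \<in> E} \<union> {u\<in>U. {u, z} \<in> E}" by auto
  then show ?thesis using assms by (simp add: degree_def card_Un_disjoint disjoint_iff)
qed

lemma degree_induced:
  assumes "z \<in> P"
  shows "degree P {e\<in>E. e \<subseteq> P} z = degree P E z"
proof -
  have "{u\<in>P. {u, z} \<in> {e\<in>E. e \<subseteq> P}} = {u\<in>P. {u, z} \<in> E}" using assms by auto
  then show ?thesis by (simp add: degree_def)
qed

lemma degree_insert_edge:
  assumes "x \<in> V" "y \<in> V" "x \<noteq> y" "{x, y} \<notin> F" "finite V"
  shows "degree V (insert {x, y} F) z = degree V F z + (if z = x \<or> z = y then 1 else 0)"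
proof -
  have "{u\<in>V. {u, z} \<in> insert {x, y} F} = {u\<in>V. {u, z} \<in> F} \<union> {u\<in>V. {u, z} = {x, y}}"
    by auto
  moreover have "{u\<in>V. {u, z} = {x, y}} = (if z = x then {y} else if z = y then {x} else {})"
    using assms(1-3) by (auto simp: doubleton_eq_iff)
  moreover have "{u\<in>V. {u, z} \<in> F} \<inter> {u\<in>V. {u, z} = {x, y}} = {}"
    using assms(4) by auto
  ultimately show ?thesis
    using assms(3,5) by (simp add: degree_def card_Un_disjoint)
qed

lemma outdeg_eq_card_arcs: "outdeg Y v = card {e\<in>Y. fst e = v}"
proof -
  have "{e\<in>Y. fst e = v} = Pair v ` {u. (v, u) \<in> Y}" by force
  then show ?thesis by (simp add: outdeg_def card_image inj_on_def)
qed

lemma indeg_eq_card_arcs: "indeg Y v = card {e\<in>Y. snd e = v}"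
proof -
  have "{e\<in>Y. snd e = v} = (\<lambda>u. (u, v)) ` {u. (u, v) \<in> Y}" by force
  then show ?thesis by (simp add: indeg_def card_image inj_on_def)
qed

lemma outdeg_insert_arc:
  assumes "(x, y) \<notin> B" "finite B"
  shows "outdeg (insert (x, y) B) z = outdeg B z + (if z = x then 1 else 0)"
proof -
  have fin: "finite {u. (z, u) \<in> B}"
    using assms(2) by (rule finite_surj[where f = snd]) force
  show ?thesis
  proof (cases "z = x")
    case True
    then have "{u. (z, u) \<in> insert (x, y) B} = insert y {u. (z, u) \<in> B}" by auto
    then show ?thesis using True fin assms(1) by (simp add: outdeg_def)
  next
    case False
    then show ?thesis by (simp add: outdeg_def)
  qed
qed

lemma orientation_subset_vertices:
  assumes "simple_graph V E" "orientation E D"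
  shows "D \<subseteq> V \<times> V"
  using assms simple_graph_edgeD[OF assms(1)] by (fastforce simp: orientation_def)

lemma orientation_induced_subset:
  assumes "orientation {e\<in>E. e \<subseteq> U} D"
  shows "D \<subseteq> U \<times> U"
  using assms by (auto simp: orientation_def)

lemma outdeg_le_degree:
  assumes "simple_graph V F" "orientation F B"
  shows "outdeg B z \<le> degree V F z"
  unfolding outdeg_def degree_def
proof (rule card_mono)
  show "finite {u\<in>V. {u, z} \<in> F}" using assms(1) by (simp add: simple_graph_def)
  show "{u. (z, u) \<in> B} \<subseteq> {u\<in>V. {u, z} \<in> F}"
  proof
    fix u assume "u \<in> {u. (z, u) \<in> B}"
    then have "{z, u} \<in> F" using assms(2) by (auto simp: orientation_def)
    then show "u \<in> {u\<in>V. {u, z} \<in> F}"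
      using simple_graph_edgeD[OF assms(1)] by (auto simp: insert_commute)
  qed
qed

lemma orientation_insert:
  assumes "orientation F B" "{x, y} \<notin> F" "x \<noteq> y"
  shows "orientation (insert {x, y} F) (insert (x, y) B)"
proof -
  have swap: "{y, x} = {x, y}" by (rule insert_commute)
  then have notin: "(x, y) \<notin> B" "(y, x) \<notin> B"
    using assms(1,2) unfolding orientation_def by (metis case_prodD)+
  show ?thesis
    unfolding orientation_def
  proof (intro conjI allI impI ballI)
    fix p assume "p \<in> insert (x, y) B"
    then show "case p of (u, v) \<Rightarrow> {u, v} \<in> insert {x, y} F"
      using assms(1) by (auto simp: orientation_def)
  next
    fix u v assume "{u, v} \<in> insert {x, y} F"
    then consider "{u, v} = {x, y}" | "{u, v} \<in> F" by blast
    then show "(u, v) \<in> insert (x, y) B \<longleftrightarrow> (v, u) \<notin> insert (x, y) B"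
    proof cases
      case 1
      then have "(u = x \<and> v = y) \<or> (u = y \<and> v = x)" by (simp add: doubleton_eq_iff)
      then show ?thesis using notin assms(3) by auto
    next
      case 2
      then have "(u, v) \<noteq> (x, y)" "(v, u) \<noteq> (x, y)" using assms(2) swap by auto
      then show ?thesis using 2 assms(1) by (auto simp: orientation_def)
    qed
  qed
qed

lemma orientation_remove:
  assumes "orientation F B" "(x, y) \<in> B"
  shows "orientation (F - {{x, y}}) (B - {(x, y)})"
proof -
  have "{x, y} \<in> F" "(y, x) \<notin> B" using assms by (auto simp: orientation_def)
  then show ?thesis
    using assms(1) by (auto simp: orientation_def doubleton_eq_iff)
qed

lemma orientation_insert_edge:
  assumes "simple_graph V F" "orientation F B" "x \<in> V" "y \<in> V" "x \<noteq> y" "{x, y} \<notin> F"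
  shows "simple_graph V (insert {x, y} F)" "orientation (insert {x, y} F) (insert (x, y) B)"
    and "degree V (insert {x, y} F) z = degree V F z + (if z = x \<or> z = y then 1 else 0)"
    and "outdeg (insert (x, y) B) z = outdeg B z + (if z = x then 1 else 0)"
proof -
  have finV: "finite V" using assms(1) by (simp add: simple_graph_def)
  have "(x, y) \<notin> B" using assms(2,6) unfolding orientation_def by blast
  moreover have "finite B"
    using orientation_subset_vertices[OF assms(1,2)] finV by (meson finite_SigmaI finite_subset)
  ultimately show "outdeg (insert (x, y) B) z = outdeg B z + (if z = x then 1 else 0)"
    by (rule outdeg_insert_arc)
  show "simple_graph V (insert {x, y} F)" by (rule simple_graph_insert_edge[OF assms(1,3-5)])
  show "orientation (insert {x, y} F) (insert (x, y) B)" by (rule orientation_insert[OF assms(2,6,5)])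
  show "degree V (insert {x, y} F) z = degree V F z + (if z = x \<or> z = y then 1 else 0)"
    by (rule degree_insert_edge[OF assms(3-6) finV])
qed

lemma orientation_Un:
  assumes "orientation F1 D1" "orientation F2 D2" "F1 \<inter> F2 = {}"
  shows "orientation (F1 \<union> F2) (D1 \<union> D2)"
  unfolding orientation_def
proof (intro conjI allI impI ballI)
  fix p assume "p \<in> D1 \<union> D2"
  then show "case p of (u, v) \<Rightarrow> {u, v} \<in> F1 \<union> F2" using assms(1,2) by (auto simp: orientation_def)
next
  fix u v assume uv: "{u, v} \<in> F1 \<union> F2"
  have swap: "{v, u} = {u, v}" by (rule insert_commute)
  have arc: "{a, b} \<in> F" if "orientation F D" "(a, b) \<in> D" for F D a b
    using that by (auto simp: orientation_def)
  from uv show "(u, v) \<in> D1 \<union> D2 \<longleftrightarrow> (v, u) \<notin> D1 \<union> D2"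
  proof
    assume "{u, v} \<in> F1"
    then have "(u, v) \<notin> D2" "(v, u) \<notin> D2"
      using arc[OF assms(2), of u v] arc[OF assms(2), of v u] assms(3) swap by (metis disjoint_iff)+
    then show ?thesis using assms(1) \<open>{u, v} \<in> F1\<close> by (auto simp: orientation_def)
  next
    assume "{u, v} \<in> F2"
    then have "(u, v) \<notin> D1" "(v, u) \<notin> D1"
      using arc[OF assms(1), of u v] arc[OF assms(1), of v u] assms(3) swap by (metis disjoint_iff)+
    then show ?thesis using assms(2) \<open>{u, v} \<in> F2\<close> by (auto simp: orientation_def)
  qed
qed

lemma proper_coloring_exists:
  assumes "simple_graph V E"
  obtains col where "\<forall>v\<in>V. col v < chromatic_number V E" "\<forall>u v. {u, v} \<in> E \<longrightarrow> col u \<noteq> col v"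
proof -
  have "finite V" using assms by (simp add: simple_graph_def)
  then obtain f :: "'a \<Rightarrow> nat" and n where f: "f ` V = {i. i < n}" "inj_on f V"
    using finite_imp_inj_to_nat_seg by metis
  have coloring: "proper_coloring V E f n"
    unfolding proper_coloring_def
  proof (intro conjI ballI allI impI)
    fix v assume "v \<in> V"
    then have "f v \<in> f ` V" by (rule imageI)
    then show "f v < n" using f(1) by simp
  next
    fix u v assume "{u, v} \<in> E"
    then have "u \<in> V" "v \<in> V" "u \<noteq> v" by (rule simple_graph_edgeD[OF assms])+
    then show "f u \<noteq> f v" using f(2) by (simp add: inj_on_eq_iff)
  qed
  have "\<exists>c. proper_coloring V E c (chromatic_number V E)"
    unfolding chromatic_number_def by (rule LeastI_ex) (use coloring in blast)
  then show thesis using that by (auto simp: proper_coloring_def)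
qed

section \<open>The graph polynomial and the painting game\<close>

definition arcs_within :: "('a \<times> 'a) set \<Rightarrow> 'a set \<Rightarrow> ('a \<times> 'a) set" where
  "arcs_within A W = {e\<in>A. fst e \<in> W \<and> snd e \<in> W}"

definition reversed_outdeg :: "('a \<times> 'a) set \<Rightarrow> ('a \<times> 'a) set \<Rightarrow> 'a \<Rightarrow> nat" where
  "reversed_outdeg A Y v = card {e\<in>A - Y. fst e = v} + card {e\<in>Y. snd e = v}"

definition signed_count :: "'b set \<Rightarrow> ('b set \<Rightarrow> bool) \<Rightarrow> int" where
  "signed_count A P = (\<Sum>Y\<in>Pow A. if P Y then (-1) ^ card Y else 0)"

text \<open>Expanding \<open>\<Prod>(u, v)\<in>A. (x\<^sub>u - x\<^sub>v)\<close> and taking the factor \<open>-x\<^sub>v\<close> exactly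
  for the arcs in \<open>Y\<close> shows that \<open>graph_poly_coeff A W t\<close> is the coefficient of
  \<open>\<Prod>v\<in>W. x\<^sub>v ^ t v\<close> in that polynomial, provided \<open>A \<subseteq> W \<times> W\<close>.\<close>
definition graph_poly_coeff :: "('a \<times> 'a) set \<Rightarrow> 'a set \<Rightarrow> ('a \<Rightarrow> nat) \<Rightarrow> int" where
  "graph_poly_coeff A W t = signed_count A (\<lambda>Y. \<forall>v\<in>W. reversed_outdeg A Y v = t v)"

lemma sum_reversed_outdeg:
  assumes "finite W" "Y \<subseteq> A" "fst ` A \<subseteq> W" "snd ` A \<subseteq> W" "finite A"
  shows "(\<Sum>v\<in>W. reversed_outdeg A Y v) = card A"
proof -
  have "(\<Sum>v\<in>W. reversed_outdeg A Y v)
      = (\<Sum>v\<in>W. card {e\<in>A - Y. fst e = v}) + (\<Sum>v\<in>W. card {e\<in>Y. snd e = v})"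
    by (simp add: reversed_outdeg_def sum.distrib)
  also have "(\<Sum>v\<in>W. card {e\<in>A - Y. fst e = v}) = card (A - Y)"
    by (rule sum_card_fibers) (use assms in auto)
  also have "(\<Sum>v\<in>W. card {e\<in>Y. snd e = v}) = card Y"
    by (rule sum_card_fibers) (use assms finite_subset in auto)
  also have "card (A - Y) + card Y = card A"
    using assms by (metis card_Diff_subset finite_subset card_mono le_add_diff_inverse2)
  finally show ?thesis .
qed

lemma sum_Pow_supersets_alternating:
  assumes "finite S" "K \<subseteq> S"
  shows "(\<Sum>J\<in>Pow S. if K \<subseteq> J then (-1::int) ^ card (S - J) else 0) = (if K = S then 1 else 0)"
proof (cases "K = S")
  case True
  have "(\<Sum>J\<in>Pow S. if K \<subseteq> J then (-1::int) ^ card (S - J) else 0) = (\<Sum>J\<in>{S}. (-1) ^ card (S - J))"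
    by (rule sum.mono_neutral_cong_right) (use True assms in auto)
  then show ?thesis using True by simp
next
  case False
  let ?sup = "{T. T \<subseteq> S \<and> K \<subseteq> T}"
  have "(\<Sum>J\<in>Pow S. if K \<subseteq> J then (-1::int) ^ card (S - J) else 0) = (\<Sum>J\<in>?sup. (-1) ^ card (S - J))"
    by (rule sum.mono_neutral_cong_right) (use assms in auto)
  also have "\<dots> = (\<Sum>J\<in>?sup. (-1) ^ card S * (-1) ^ card J)"
  proof (rule sum.cong[OF refl])
    fix J assume "J \<in> ?sup"
    then have "card (S - J) = card S - card J" "card J \<le> card S"
      using assms(1) by (auto simp: card_Diff_subset finite_subset card_mono)
    then show "(-1::int) ^ card (S - J) = (-1) ^ card S * (-1) ^ card J"
      by (simp add: neg_one_power_add_eq_neg_one_power_diff power_add[symmetric])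
  qed
  also have "\<dots> = (-1) ^ card S * (\<Sum>J\<in>?sup. (-1) ^ card J)"
    by (simp add: sum_distrib_left)
  also have "(\<Sum>J\<in>?sup. (-1::int) ^ card J) = 0"
    using assms False card_subsupersets_even_odd[OF assms(1), of K]
    by (intro sum_alternating_cancels) (auto simp: conj_assoc)
  finally show ?thesis using False by simp
qed

definition toggle :: "'b \<Rightarrow> 'b set \<Rightarrow> 'b set" where
  "toggle x Y = (if x \<in> Y then Y - {x} else insert x Y)"

text \<open>Toggling a fixed element is a sign-reversing involution on \<open>Pow A\<close>.\<close>
lemma signed_count_eq_0_if_toggle_invariant:
  assumes "finite A" "x \<in> A" "\<And>Y. Y \<subseteq> A \<Longrightarrow> P (toggle x Y) = P Y"
  shows "signed_count A P = 0"
proof -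
  let ?g = "\<lambda>Y. if P Y then (-1::int) ^ card Y else 0"
  have involution: "toggle x (toggle x Y) = Y" for Y
    using assms(2) by (auto simp: toggle_def)
  have toggle_Pow: "Y \<in> Pow A \<Longrightarrow> toggle x Y \<in> Pow A" for Y
    using assms(2) by (auto simp: toggle_def)
  have sign: "?g (toggle x Y) = - ?g Y" if "Y \<in> Pow A" for Y
  proof -
    have fin: "finite Y" using that assms(1) finite_subset by auto
    have "(-1::int) ^ card (toggle x Y) = - ((-1) ^ card Y)"
    proof (cases "x \<in> Y")
      case True
      then have "card Y = Suc (card (Y - {x}))" using fin by (metis card_Suc_Diff1)
      then have "(-1::int) ^ card Y = - ((-1) ^ card (Y - {x}))" by simp
      then show ?thesis using True by (simp add: toggle_def)
    next
      case False
      then show ?thesis using fin by (simp add: toggle_def)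
    qed
    then show ?thesis using assms(3) that by simp
  qed
  have "signed_count A P = sum (\<lambda>Y. ?g (toggle x Y)) (Pow A)"
    unfolding signed_count_def
    by (rule sum.reindex_bij_witness[of _ "toggle x" "toggle x"]) (use involution toggle_Pow in auto)
  also have "\<dots> = - signed_count A P"
    using sign by (simp add: signed_count_def sum_negf[symmetric])
  finally show ?thesis by simp
qed

lemma reversed_outdeg_toggle:
  assumes "v \<noteq> fst e" "v \<noteq> snd e"
  shows "reversed_outdeg A (toggle e Y) v = reversed_outdeg A Y v"
proof -
  have "{e'\<in>A - toggle e Y. fst e' = v} = {e'\<in>A - Y. fst e' = v}"
    and "{e'\<in>toggle e Y. snd e' = v} = {e'\<in>Y. snd e' = v}"
    using assms by (auto simp: toggle_def)
  then show ?thesis by (simp add: reversed_outdeg_def)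
qed

lemma reversed_outdeg_Un:
  assumes "A1 \<inter> A2 = {}" "Y1 \<subseteq> A1" "Y2 \<subseteq> A2" "finite A1" "finite A2"
  shows "reversed_outdeg (A1 \<union> A2) (Y1 \<union> Y2) v = reversed_outdeg A1 Y1 v + reversed_outdeg A2 Y2 v"
proof -
  have "{e\<in>(A1 \<union> A2) - (Y1 \<union> Y2). fst e = v} = {e\<in>A1 - Y1. fst e = v} \<union> {e\<in>A2 - Y2. fst e = v}"
    and "{e\<in>Y1 \<union> Y2. snd e = v} = {e\<in>Y1. snd e = v} \<union> {e\<in>Y2. snd e = v}"
    using assms by auto
  moreover have "finite {e\<in>Y1. snd e = v}" "finite {e\<in>Y2. snd e = v}"
    using assms by (auto intro: finite_subset)
  moreover have "{e\<in>Y1. snd e = v} \<inter> {e\<in>Y2. snd e = v} = {}"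
    using assms by auto
  ultimately show ?thesis
    using assms by (simp add: reversed_outdeg_def card_Un_disjoint disjoint_iff)
qed

lemma sum_Pow_Un:
  assumes "A1 \<inter> A2 = {}" "finite A1" "finite A2"
  shows "(\<Sum>Y\<in>Pow (A1 \<union> A2). h Y) = (\<Sum>Y2\<in>Pow A2. \<Sum>Y1\<in>Pow A1. h (Y1 \<union> Y2))"
proof -
  have "(\<Sum>Y2\<in>Pow A2. \<Sum>Y1\<in>Pow A1. h (Y1 \<union> Y2)) = (\<Sum>p\<in>Pow A2 \<times> Pow A1. h (snd p \<union> fst p))"
    by (simp add: sum.cartesian_product case_prod_beta)
  also have "\<dots> = (\<Sum>Y\<in>Pow (A1 \<union> A2). h Y)"
    by (rule sum.reindex_bij_witness[of _ "\<lambda>Y. (Y \<inter> A2, Y \<inter> A1)" "\<lambda>p. snd p \<union> fst p"])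
       (use assms in auto)
  finally show ?thesis by simp
qed

lemma signed_count_Un:
  assumes "A1 \<inter> A2 = {}" "finite A1" "finite A2"
  shows "signed_count (A1 \<union> A2) P = (\<Sum>Y2\<in>Pow A2. (-1) ^ card Y2 * signed_count A1 (\<lambda>Y1. P (Y1 \<union> Y2)))"
proof -
  have "signed_count (A1 \<union> A2) P
      = (\<Sum>Y2\<in>Pow A2. \<Sum>Y1\<in>Pow A1. if P (Y1 \<union> Y2) then (-1) ^ card (Y1 \<union> Y2) else 0)"
    unfolding signed_count_def by (rule sum_Pow_Un[OF assms])
  also have "\<dots> = (\<Sum>Y2\<in>Pow A2. \<Sum>Y1\<in>Pow A1. (-1) ^ card Y2 * (if P (Y1 \<union> Y2) then (-1) ^ card Y1 else 0))"
  proof (intro sum.cong refl)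
    fix Y1 Y2 assume "Y2 \<in> Pow A2" "Y1 \<in> Pow A1"
    then have "card (Y1 \<union> Y2) = card Y1 + card Y2"
      using assms by (intro card_Un_disjoint) (auto intro: finite_subset)
    then show "(if P (Y1 \<union> Y2) then (-1::int) ^ card (Y1 \<union> Y2) else 0)
        = (-1) ^ card Y2 * (if P (Y1 \<union> Y2) then (-1) ^ card Y1 else 0)"
      by (simp add: power_add)
  qed
  also have "\<dots> = (\<Sum>Y2\<in>Pow A2. (-1) ^ card Y2 * signed_count A1 (\<lambda>Y1. P (Y1 \<union> Y2)))"
    by (simp add: signed_count_def sum_distrib_left)
  finally show ?thesis .
qed

lemma signed_count_by_fibers:
  assumes "finite A"
  shows "signed_count A (\<lambda>Y. Q (\<phi> Y))
       = (\<Sum>y\<in>\<phi> ` Pow A. if Q y then signed_count A (\<lambda>Y. \<phi> Y = y) else 0)"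
proof -
  let ?h = "\<lambda>Y. if Q (\<phi> Y) then (-1::int) ^ card Y else 0"
  have "signed_count A (\<lambda>Y. Q (\<phi> Y)) = (\<Sum>y\<in>\<phi> ` Pow A. \<Sum>Y\<in>{Y\<in>Pow A. \<phi> Y = y}. ?h Y)"
    unfolding signed_count_def by (rule sum.image_gen) (use assms in simp)
  also have "\<dots> = (\<Sum>y\<in>\<phi> ` Pow A. if Q y then signed_count A (\<lambda>Y. \<phi> Y = y) else 0)"
  proof (rule sum.cong[OF refl])
    fix y
    have "(\<Sum>Y\<in>{Y\<in>Pow A. \<phi> Y = y}. ?h Y) = (\<Sum>Y\<in>{Y\<in>Pow A. \<phi> Y = y}. if Q y then (-1) ^ card Y else 0)"
      by (rule sum.cong) auto
    also have "\<dots> = (if Q y then signed_count A (\<lambda>Y. \<phi> Y = y) else 0)"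
      unfolding signed_count_def using assms by (simp add: sum.inter_filter[symmetric])
    finally show "(\<Sum>Y\<in>{Y\<in>Pow A. \<phi> Y = y}. ?h Y) = (if Q y then signed_count A (\<lambda>Y. \<phi> Y = y) else 0)" .
  qed
  finally show ?thesis .
qed

lemma graph_poly_coeff_nonzero_imp_sum:
  assumes "graph_poly_coeff A W t \<noteq> 0" "finite A" "finite W" "fst ` A \<subseteq> W" "snd ` A \<subseteq> W"
  shows "(\<Sum>v\<in>W. t v) = card A"
proof -
  have "\<exists>Y\<in>Pow A. \<forall>v\<in>W. reversed_outdeg A Y v = t v"
  proof (rule ccontr)
    assume "\<not> ?thesis"
    then have "graph_poly_coeff A W t = 0"
      unfolding graph_poly_coeff_def signed_count_def by (intro sum.neutral) auto
    with assms(1) show False by simp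
  qed
  then obtain Y where "Y \<subseteq> A" "\<forall>v\<in>W. reversed_outdeg A Y v = t v" by auto
  then show ?thesis using sum_reversed_outdeg[of W Y A] assms by simp
qed

lemma reversed_outdeg_eq_iff_ge:
  assumes "(\<Sum>v\<in>W. t v) = card A" "finite A" "finite W" "fst ` A \<subseteq> W" "snd ` A \<subseteq> W" "Y \<subseteq> A"
  shows "(\<forall>v\<in>W. reversed_outdeg A Y v = t v) \<longleftrightarrow> (\<forall>v\<in>W. t v \<le> reversed_outdeg A Y v)"
proof
  assume ge: "\<forall>v\<in>W. t v \<le> reversed_outdeg A Y v"
  have eq: "(\<Sum>v\<in>W. t v) = (\<Sum>v\<in>W. reversed_outdeg A Y v)"
    using assms sum_reversed_outdeg[of W Y A] by simp
  show "\<forall>v\<in>W. reversed_outdeg A Y v = t v"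
    using sum_mono_inv[OF eq] ge assms(3) by (metis (no_types, lifting))
qed auto

definition lowered_count :: "('a \<times> 'a) set \<Rightarrow> 'a set \<Rightarrow> 'a set \<Rightarrow> 'a set \<Rightarrow> ('a \<Rightarrow> nat) \<Rightarrow> int" where
  "lowered_count A W S J t = signed_count A (\<lambda>Y.
     (\<forall>v\<in>W - S. reversed_outdeg A Y v = t v) \<and> (\<forall>v\<in>S - J. reversed_outdeg A Y v < t v))"

lemma graph_poly_coeff_inclusion_exclusion:
  assumes "(\<Sum>v\<in>W. t v) = card A" "finite A" "finite W" "fst ` A \<subseteq> W" "snd ` A \<subseteq> W" "S \<subseteq> W"
  shows "graph_poly_coeff A W t = (\<Sum>J\<in>Pow S. (-1) ^ card (S - J) * lowered_count A W S J t)"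
proof -
  let ?ro = "reversed_outdeg A"
  let ?cond = "\<lambda>J Y. (\<forall>v\<in>W - S. ?ro Y v = t v) \<and> (\<forall>v\<in>S - J. ?ro Y v < t v)"
  have finS: "finite S" using assms finite_subset by blast
  have fibre: "(\<Sum>J\<in>Pow S. if ?cond J Y then (-1) ^ card (S - J) * (-1) ^ card Y else 0)
      = (if \<forall>v\<in>W. ?ro Y v = t v then (-1::int) ^ card Y else 0)" if "Y \<in> Pow A" for Y
  proof -
    define K where "K = {v\<in>S. t v \<le> ?ro Y v}"
    have KS: "K \<subseteq> S" by (auto simp: K_def)
    have "?cond J Y \<longleftrightarrow> (\<forall>v\<in>W - S. ?ro Y v = t v) \<and> K \<subseteq> J" if "J \<subseteq> S" for J
      using that by (auto simp: K_def not_less) (meson DiffI leD)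
    then have "(\<Sum>J\<in>Pow S. if ?cond J Y then (-1) ^ card (S - J) * (-1) ^ card Y else 0)
        = (\<Sum>J\<in>Pow S. if \<forall>v\<in>W - S. ?ro Y v = t v
             then (-1) ^ card Y * (if K \<subseteq> J then (-1::int) ^ card (S - J) else 0) else 0)"
      by (intro sum.cong refl) auto
    also have "\<dots> = (if \<forall>v\<in>W - S. ?ro Y v = t v
        then (-1) ^ card Y * (\<Sum>J\<in>Pow S. if K \<subseteq> J then (-1::int) ^ card (S - J) else 0) else 0)"
    proof (cases "\<forall>v\<in>W - S. ?ro Y v = t v")
      case True
      then show ?thesis by (simp add: sum_distrib_left)
    next
      case False
      then show ?thesis by (simp only: if_not_P[OF False] if_False sum.neutral_const)
    qed
    also have "\<dots> = (if (\<forall>v\<in>W - S. ?ro Y v = t v) \<and> K = S then (-1) ^ card Y else 0)"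
      unfolding sum_Pow_supersets_alternating[OF finS KS] by simp
    also have "(\<forall>v\<in>W - S. ?ro Y v = t v) \<and> K = S \<longleftrightarrow> (\<forall>v\<in>W. ?ro Y v = t v)"
      using reversed_outdeg_eq_iff_ge[OF assms(1-5), of Y] that assms(6) by (auto simp: K_def)
    finally show ?thesis .
  qed
  have "(\<Sum>J\<in>Pow S. (-1) ^ card (S - J) * lowered_count A W S J t)
      = (\<Sum>J\<in>Pow S. \<Sum>Y\<in>Pow A. if ?cond J Y then (-1) ^ card (S - J) * (-1) ^ card Y else 0)"
    by (simp add: lowered_count_def signed_count_def sum_distrib_left if_distrib cong: if_cong)
  also have "\<dots> = (\<Sum>Y\<in>Pow A. \<Sum>J\<in>Pow S. if ?cond J Y then (-1) ^ card (S - J) * (-1) ^ card Y else 0)"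
    by (rule sum.swap)
  also have "\<dots> = graph_poly_coeff A W t"
    using fibre by (simp add: graph_poly_coeff_def signed_count_def)
  finally show ?thesis by simp
qed

lemma lowered_count_eq_0_if_arc_inside:
  assumes "finite A" "e \<in> A" "fst e \<in> J" "snd e \<in> J" "J \<subseteq> S"
  shows "lowered_count A W S J t = 0"
  unfolding lowered_count_def
proof (rule signed_count_eq_0_if_toggle_invariant[OF assms(1,2)])
  fix Y
  have "reversed_outdeg A (toggle e Y) v = reversed_outdeg A Y v" if "v \<in> (W - S) \<union> (S - J)" for v
    using that assms(3-5) by (intro reversed_outdeg_toggle) auto
  then show "((\<forall>v\<in>W - S. reversed_outdeg A (toggle e Y) v = t v) \<and> (\<forall>v\<in>S - J. reversed_outdeg A (toggle e Y) v < t v))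
      = ((\<forall>v\<in>W - S. reversed_outdeg A Y v = t v) \<and> (\<forall>v\<in>S - J. reversed_outdeg A Y v < t v))"
    by auto
qed

lemma signed_count_restricted_outdeg_eq_0:
  assumes "finite A" "\<And>y. \<forall>v. v \<notin> W \<longrightarrow> y v = 0 \<Longrightarrow> Q y \<Longrightarrow> graph_poly_coeff A W y = 0"
  shows "signed_count A (\<lambda>Y. Q (\<lambda>v. if v \<in> W then reversed_outdeg A Y v else 0)) = 0"
proof -
  let ?\<tau> = "\<lambda>Y v. if v \<in> W then reversed_outdeg A Y v else 0"
  have "signed_count A (\<lambda>Y. ?\<tau> Y = y) = graph_poly_coeff A W y" if "\<forall>v. v \<notin> W \<longrightarrow> y v = 0" for y
  proof -
    have "(?\<tau> Y = y) \<longleftrightarrow> (\<forall>v\<in>W. reversed_outdeg A Y v = y v)" for Y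
      using that by (auto simp: fun_eq_iff)
    then show ?thesis by (simp add: graph_poly_coeff_def)
  qed
  then have "(if Q y then signed_count A (\<lambda>Y. ?\<tau> Y = y) else 0) = 0" if "y \<in> ?\<tau> ` Pow A" for y
    using that assms(2) by auto
  then show ?thesis
    by (simp add: signed_count_by_fibers[OF assms(1), of Q ?\<tau>])
qed

lemma lowered_count_eq_0_if_coeffs_vanish:
  assumes "finite R" "J \<subseteq> S" "S \<subseteq> W"
    and vanish: "\<And>t'. \<forall>v\<in>W - J. t' v \<le> t v \<Longrightarrow> \<forall>v\<in>S - J. t' v < t v
        \<Longrightarrow> graph_poly_coeff (arcs_within R (W - J)) (W - J) t' = 0"
  shows "lowered_count (arcs_within R W) W S J t = 0"
proof -
  define A where "A = arcs_within R W"
  define A' where "A' = arcs_within R (W - J)"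
  define X where "X = A - A'"
  have "A' \<subseteq> A" by (auto simp: A_def A'_def arcs_within_def)
  then have A_split: "A = A' \<union> X" and disj: "A' \<inter> X = {}" by (auto simp: X_def)
  have fin: "finite A'" "finite X"
    using assms(1) by (auto simp: A_def A'_def X_def arcs_within_def)
  let ?\<tau> = "\<lambda>Y v. if v \<in> W - J then reversed_outdeg A' Y v else 0"
  define Q where "Q off y \<longleftrightarrow> (\<forall>v\<in>W - S. y v + off v = t v) \<and> (\<forall>v\<in>S - J. y v + off v < t v)"
    for off y :: "'a \<Rightarrow> nat"
  define P where "P Y \<longleftrightarrow> (\<forall>v\<in>W - S. reversed_outdeg A Y v = t v) \<and> (\<forall>v\<in>S - J. reversed_outdeg A Y v < t v)"
    for Y
  have P_split: "P (Y1 \<union> Y2) \<longleftrightarrow> Q (reversed_outdeg X Y2) (?\<tau> Y1)" if "Y1 \<in> Pow A'" "Y2 \<in> Pow X" for Y1 Y2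
  proof -
    have "reversed_outdeg A (Y1 \<union> Y2) v = reversed_outdeg A' Y1 v + reversed_outdeg X Y2 v" for v
      unfolding A_split using that disj fin by (intro reversed_outdeg_Un) auto
    then show ?thesis using assms(2,3) by (auto simp: P_def Q_def)
  qed
  have inner: "signed_count A' (\<lambda>Y1. P (Y1 \<union> Y2)) = 0" if "Y2 \<in> Pow X" for Y2
  proof -
    have "signed_count A' (\<lambda>Y1. P (Y1 \<union> Y2)) = signed_count A' (\<lambda>Y1. Q (reversed_outdeg X Y2) (?\<tau> Y1))"
      unfolding signed_count_def using P_split that by (intro sum.cong refl) auto
    also have "\<dots> = 0"
    proof (rule signed_count_restricted_outdeg_eq_0[OF fin(1)])
      fix y :: "'a \<Rightarrow> nat"
      assume "Q (reversed_outdeg X Y2) y"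
      then have eq: "\<forall>v\<in>W - S. y v \<le> t v" and less: "\<forall>v\<in>S - J. y v < t v"
        unfolding Q_def by (metis le_add1, metis add_lessD1)
      then have "\<forall>v\<in>W - J. y v \<le> t v" by (metis Diff_iff less_imp_le_nat)
      with less show "graph_poly_coeff A' (W - J) y = 0" using vanish by (simp add: A'_def)
    qed
    finally show ?thesis .
  qed
  have "lowered_count A W S J t = signed_count (A' \<union> X) P"
    unfolding lowered_count_def P_def A_split ..
  also have "\<dots> = (\<Sum>Y2\<in>Pow X. (-1) ^ card Y2 * signed_count A' (\<lambda>Y1. P (Y1 \<union> Y2)))"
    by (rule signed_count_Un[OF disj fin])
  also have "\<dots> = 0" using inner by simp
  finally show ?thesis by (simp add: A_def)
qed

text \<open>The combinatorial core of Schauz's proof that Alon--Tarsi orientations give paintability.\<close>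
lemma graph_poly_coeff_move:
  assumes "finite R" "finite W" "S \<subseteq> W" "graph_poly_coeff (arcs_within R W) W t \<noteq> 0"
  obtains J t' where "J \<subseteq> S" "\<forall>e\<in>R. fst e \<in> J \<longrightarrow> snd e \<notin> J"
    and "\<forall>v\<in>W - J. t' v \<le> t v" "\<forall>v\<in>S - J. t' v < t v"
    and "graph_poly_coeff (arcs_within R (W - J)) (W - J) t' \<noteq> 0"
proof -
  let ?A = "arcs_within R W"
  have A: "finite ?A" "fst ` ?A \<subseteq> W" "snd ` ?A \<subseteq> W"
    using assms(1) by (auto simp: arcs_within_def)
  have "(\<Sum>v\<in>W. t v) = card ?A"
    using graph_poly_coeff_nonzero_imp_sum assms(2,4) A by blast
  then have "graph_poly_coeff ?A W t = (\<Sum>J\<in>Pow S. (-1) ^ card (S - J) * lowered_count ?A W S J t)"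
    using graph_poly_coeff_inclusion_exclusion A assms(2,3) by blast
  then obtain J where J: "J \<subseteq> S" and nonzero: "lowered_count ?A W S J t \<noteq> 0"
    using assms(4) by (metis (no_types, lifting) PowD mult_zero_right sum.neutral)
  have "\<forall>e\<in>R. fst e \<in> J \<longrightarrow> snd e \<notin> J"
  proof (intro ballI impI notI)
    fix e assume "e \<in> R" "fst e \<in> J" "snd e \<in> J"
    then have "e \<in> ?A" using J assms(3) by (auto simp: arcs_within_def)
    then show False
      using lowered_count_eq_0_if_arc_inside[OF A(1) _ \<open>fst e \<in> J\<close> \<open>snd e \<in> J\<close> J] nonzero by blast
  qed
  moreover obtain t' where "\<forall>v\<in>W - J. t' v \<le> t v" "\<forall>v\<in>S - J. t' v < t v"
    "graph_poly_coeff (arcs_within R (W - J)) (W - J) t' \<noteq> 0"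
    using lowered_count_eq_0_if_coeffs_vanish[OF assms(1) J assms(3)] nonzero by blast
  ultimately show thesis using that J by blast
qed

lemma independent_if_no_arc_inside:
  assumes "\<forall>u v. {u, v} \<in> E \<longrightarrow> (u, v) \<in> R \<or> (v, u) \<in> R" "\<forall>e\<in>R. fst e \<in> J \<longrightarrow> snd e \<notin> J"
  shows "independent E J"
  unfolding independent_def
proof (intro ballI notI)
  fix u v assume "u \<in> J" "v \<in> J" "{u, v} \<in> E"
  then show False using assms by (metis fst_conv snd_conv)
qed

lemma sum_tokens_removed_less:
  fixes f :: "'a \<Rightarrow> nat"
  assumes "finite V" "S \<noteq> {}" "S \<subseteq> {v\<in>V. 0 < f v}"
  shows "(\<Sum>v\<in>V. if v \<in> S then f v - 1 else f v) < sum f V"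
proof (rule sum_strict_mono_ex1[OF assms(1)])
  show "\<forall>v\<in>V. (if v \<in> S then f v - 1 else f v) \<le> f v" by auto
  obtain s where "s \<in> S" using assms(2) by blast
  then show "\<exists>v\<in>V. (if v \<in> S then f v - 1 else f v) < f v" using assms(3) by (auto intro!: bexI[of _ s])
qed

lemma painter_wins_if_graph_poly_coeff_nonzero:
  assumes "simple_graph V E" "finite R" "\<forall>u v. {u, v} \<in> E \<longrightarrow> (u, v) \<in> R \<or> (v, u) \<in> R"
  shows "\<forall>v\<in>V - C. t v < f v \<Longrightarrow> graph_poly_coeff (arcs_within R (V - C)) (V - C) t \<noteq> 0
    \<Longrightarrow> painter_wins V E C f"
proof (induction "sum f V" arbitrary: C f t rule: less_induct)
  case less
  have finV: "finite V" using assms(1) by (simp add: simple_graph_def)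
  show ?case
  proof (cases "\<forall>v\<in>V. f v = 0")
    case True
    then have "V \<subseteq> C" using less.prems(1) by fastforce
    with True show ?thesis by (rule game_over)
  next
    case False
    then have "\<exists>v\<in>V. 0 < f v" by auto
    then show ?thesis
    proof (rule step, intro allI impI)
      fix S assume S: "S \<noteq> {} \<and> S \<subseteq> {v\<in>V. 0 < f v}"
      define f' where "f' = (\<lambda>v. if v \<in> S then f v - 1 else f v)"
      obtain J t' where J: "J \<subseteq> S \<inter> (V - C)" and no_arc: "\<forall>e\<in>R. fst e \<in> J \<longrightarrow> snd e \<notin> J"
        and t'_le: "\<forall>v\<in>(V - C) - J. t' v \<le> t v" and t'_less: "\<forall>v\<in>(S \<inter> (V - C)) - J. t' v < t v"
        and nonzero: "graph_poly_coeff (arcs_within R ((V - C) - J)) ((V - C) - J) t' \<noteq> 0"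
        using graph_poly_coeff_move[OF assms(2) _ _ less.prems(2), of "S \<inter> (V - C)"] finV by auto
      have "t' v < f' v" if "v \<in> V - (C \<union> J)" for v
      proof (cases "v \<in> S")
        case True
        moreover have "t' v < t v" "t v < f v" using True that t'_less less.prems(1) by auto
        ultimately show ?thesis by (simp add: f'_def)
      next
        case False
        moreover have "t' v \<le> t v" "t v < f v" using that t'_le less.prems(1) by auto
        ultimately show ?thesis by (simp add: f'_def)
      qed
      then have "\<forall>v\<in>V - (C \<union> J). t' v < f' v" by blast
      moreover have "sum f' V < sum f V"
        unfolding f'_def using sum_tokens_removed_less[OF finV] S by blast
      moreover have "V - (C \<union> J) = (V - C) - J" by auto
      ultimately have "painter_wins V E (C \<union> J) f'"
        using less.hyps nonzero by metis
      then show "\<exists>I\<subseteq>S. independent E I \<and> painter_wins V E (C \<union> I) (\<lambda>v. if v \<in> S then f v - 1 else f v)"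
        using J independent_if_no_arc_inside[OF assms(3) no_arc] by (auto simp: f'_def)
    qed
  qed
qed

section \<open>Alon--Tarsi orientations\<close>

text \<open>The Alon--Tarsi identity: reversing \<open>Y\<close> preserves all out-degrees iff \<open>Y\<close> is Eulerian.\<close>
lemma graph_poly_coeff_outdeg:
  assumes "finite D"
  shows "graph_poly_coeff D V (outdeg D) = int (EE V D) - int (EO V D)"
proof -
  have eulerian_iff: "(\<forall>v\<in>V. reversed_outdeg D Y v = outdeg D v) \<longleftrightarrow> (\<forall>v\<in>V. outdeg Y v = indeg Y v)"
    if "Y \<subseteq> D" for Y
  proof -
    have "outdeg D v = card {e\<in>D - Y. fst e = v} + outdeg Y v" for v
    proof -
      have "{e\<in>D. fst e = v} = {e\<in>D - Y. fst e = v} \<union> {e\<in>Y. fst e = v}" using that by auto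
      moreover have "finite {e\<in>Y. fst e = v}" using assms that by (auto intro: finite_subset)
      ultimately show ?thesis
        using assms by (simp add: outdeg_eq_card_arcs card_Un_disjoint disjoint_iff)
    qed
    then show ?thesis by (auto simp: reversed_outdeg_def indeg_eq_card_arcs)
  qed
  let ?eul = "eulerian_subgraphs V D"
  have eul_Pow: "?eul \<subseteq> Pow D" by (auto simp: eulerian_subgraphs_def)
  then have fin: "finite ?eul" using assms by (meson finite_Pow_iff finite_subset)
  have "graph_poly_coeff D V (outdeg D) = (\<Sum>Y\<in>Pow D. if Y \<in> ?eul then (-1) ^ card Y else 0)"
    unfolding graph_poly_coeff_def signed_count_def
    by (intro sum.cong refl) (auto simp: eulerian_iff eulerian_subgraphs_def)
  also have "\<dots> = (\<Sum>Y\<in>?eul. (-1::int) ^ card Y)"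
    by (rule sum.mono_neutral_cong_right) (use assms eul_Pow in auto)
  also have "\<dots> = (\<Sum>Y\<in>{H\<in>?eul. even (card H)}. (-1::int) ^ card Y)
      + (\<Sum>Y\<in>{H\<in>?eul. odd (card H)}. (-1::int) ^ card Y)"
    by (rule sum_Un_eq[symmetric]) (use fin in auto)
  also have "\<dots> = int (EE V D) - int (EO V D)"
    by (simp add: EE_def EO_def)
  finally show ?thesis .
qed

lemma paintable_if_AT_orientation:
  assumes "simple_graph V E" "orientation E D" "AT_orientation V D" "\<forall>v\<in>V. outdeg D v < k"
  shows "f_paintable V E (\<lambda>_. k)"
proof -
  have "D \<subseteq> V \<times> V" using orientation_subset_vertices[OF assms(1,2)] .
  moreover have "finite V" using assms(1) by (simp add: simple_graph_def)
  ultimately have "finite D" "arcs_within D (V - {}) = D"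
    by (auto simp: arcs_within_def intro: finite_subset)
  moreover have "graph_poly_coeff D V (outdeg D) \<noteq> 0"
    using graph_poly_coeff_outdeg[OF \<open>finite D\<close>] assms(3) by (simp add: AT_orientation_def)
  ultimately have "painter_wins V E {} (\<lambda>_. k)"
    using painter_wins_if_graph_poly_coeff_nonzero[OF assms(1) \<open>finite D\<close>] assms(2,4)
    by (auto simp: orientation_def)
  then show ?thesis by (simp add: f_paintable_def)
qed

definition layered :: "('a \<times> 'a) set \<Rightarrow> ('a \<Rightarrow> nat) \<Rightarrow> ('a \<Rightarrow> bool) \<Rightarrow> bool" where
  "layered D lev side \<longleftrightarrow> (\<forall>(a, b)\<in>D. lev a < lev b \<or> (lev a = lev b \<and> side a \<noteq> side b))"

lemma eulerian_cut_balanced: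
  assumes "Y \<in> eulerian_subgraphs V D" "finite Y" "L \<subseteq> V" "finite L"
  shows "card {e\<in>Y. fst e \<in> L} = card {e\<in>Y. snd e \<in> L}"
proof -
  have "card {e\<in>Y. fst e \<in> L} = (\<Sum>v\<in>L. card {e\<in>{e\<in>Y. fst e \<in> L}. fst e = v})"
    by (rule sum_card_fibers[symmetric]) (use assms in auto)
  also have "\<dots> = (\<Sum>v\<in>L. outdeg Y v)"
    by (intro sum.cong refl) (auto simp: outdeg_eq_card_arcs intro!: arg_cong[where f = card])
  also have "\<dots> = (\<Sum>v\<in>L. indeg Y v)"
    using assms(1,3) by (intro sum.cong refl) (auto simp: eulerian_subgraphs_def)
  also have "\<dots> = (\<Sum>v\<in>L. card {e\<in>{e\<in>Y. snd e \<in> L}. snd e = v})"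
    by (intro sum.cong refl) (auto simp: indeg_eq_card_arcs intro!: arg_cong[where f = card])
  also have "\<dots> = card {e\<in>Y. snd e \<in> L}"
    by (rule sum_card_fibers) (use assms in auto)
  finally show ?thesis .
qed

text \<open>Cut along the levels \<open>\<le> lev a\<close>: an arc of \<open>Y\<close> going up would leave the cut
  without a returning arc.\<close>
lemma eulerian_arc_within_level:
  assumes "layered D lev side" "D \<subseteq> V \<times> V" "finite V"
    and Y: "Y \<in> eulerian_subgraphs V D" and "(a, b) \<in> Y"
  shows "lev a = lev b"
proof (rule ccontr)
  assume "lev a \<noteq> lev b"
  have YD: "Y \<subseteq> D" using Y by (simp add: eulerian_subgraphs_def)
  then have finY: "finite Y" using assms(2,3) by (meson finite_SigmaI finite_subset)
  have up: "lev x \<le> lev y" if "(x, y) \<in> Y" for x y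
    using that YD assms(1) by (fastforce simp: layered_def)
  with \<open>lev a \<noteq> lev b\<close> \<open>(a, b) \<in> Y\<close> have "lev a < lev b" by fastforce
  define L where "L = {v\<in>V. lev v \<le> lev a}"
  have "{e\<in>Y. snd e \<in> L} \<subseteq> {e\<in>Y. fst e \<in> L}"
    using up YD assms(2) by (fastforce simp: L_def)
  moreover have "(a, b) \<in> {e\<in>Y. fst e \<in> L} - {e\<in>Y. snd e \<in> L}"
    using \<open>(a, b) \<in> Y\<close> \<open>lev a < lev b\<close> YD assms(2) by (auto simp: L_def)
  ultimately have "{e\<in>Y. snd e \<in> L} \<subset> {e\<in>Y. fst e \<in> L}" by blast
  then have "card {e\<in>Y. snd e \<in> L} < card {e\<in>Y. fst e \<in> L}"
    by (rule psubset_card_mono[rotated]) (use finY in simp)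
  moreover have "L \<subseteq> V" "finite L" using assms(3) by (auto simp: L_def)
  ultimately show False using eulerian_cut_balanced[OF Y finY] by simp
qed

lemma even_card_eulerian_if_layered:
  assumes "layered D lev side" "D \<subseteq> V \<times> V" "finite V" "Y \<in> eulerian_subgraphs V D"
  shows "even (card Y)"
proof -
  have YD: "Y \<subseteq> D" using assms(4) by (simp add: eulerian_subgraphs_def)
  then have finY: "finite Y" using assms(2,3) by (meson finite_SigmaI finite_subset)
  have sides: "side x \<noteq> side y" if "(x, y) \<in> Y" for x y
    using eulerian_arc_within_level[OF assms that] that YD assms(1) by (fastforce simp: layered_def)
  define L where "L = {v\<in>V. side v}"
  have "Y = {e\<in>Y. fst e \<in> L} \<union> {e\<in>Y. snd e \<in> L}" and "{e\<in>Y. fst e \<in> L} \<inter> {e\<in>Y. snd e \<in> L} = {}"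
    using sides YD assms(2) by (fastforce simp: L_def)+
  then have "card Y = card {e\<in>Y. fst e \<in> L} + card {e\<in>Y. snd e \<in> L}"
    using finY by (metis (no_types, lifting) card_Un_disjoint finite_Un)
  moreover have "L \<subseteq> V" "finite L" using assms(3) by (auto simp: L_def)
  then have "card {e\<in>Y. fst e \<in> L} = card {e\<in>Y. snd e \<in> L}"
    by (rule eulerian_cut_balanced[OF assms(4) finY])
  ultimately show ?thesis by simp
qed

lemma AT_orientation_if_layered:
  assumes "layered D lev side" "D \<subseteq> V \<times> V" "finite V"
  shows "AT_orientation V D"
proof -
  have "finite D" using assms(2,3) by (meson finite_SigmaI finite_subset)
  then have "finite (eulerian_subgraphs V D)"
    by (rule rev_finite_subset[OF finite_Pow_iff[THEN iffD2]]) (auto simp: eulerian_subgraphs_def)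
  moreover have "{} \<in> {H \<in> eulerian_subgraphs V D. even (card H)}"
    by (simp add: eulerian_subgraphs_def outdeg_def indeg_def)
  ultimately have "EE V D \<noteq> 0" by (auto simp: EE_def)
  moreover have "{H \<in> eulerian_subgraphs V D. odd (card H)} = {}"
    using even_card_eulerian_if_layered[OF assms] by blast
  then have "EO V D = 0" unfolding EO_def by (metis card.empty)
  ultimately show ?thesis by (simp add: AT_orientation_def)
qed

lemma AT_orientation_exists:
  assumes "simple_graph V E"
  obtains D where "orientation E D" "AT_orientation V D"
proof -
  have finV: "finite V" using assms by (simp add: simple_graph_def)
  then obtain lev :: "'a \<Rightarrow> nat" and n where lev: "inj_on lev V"
    using finite_imp_inj_to_nat_seg by blast
  define D where "D = {(u, v). {u, v} \<in> E \<and> lev u < lev v}"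
  have "orientation E D"
    unfolding orientation_def
  proof (intro conjI allI impI ballI)
    fix u v assume "{u, v} \<in> E"
    then have "lev u \<noteq> lev v" "{v, u} \<in> E"
      using simple_graph_edgeD[OF assms \<open>{u, v} \<in> E\<close>] lev by (auto simp: inj_on_eq_iff insert_commute)
    then show "(u, v) \<in> D \<longleftrightarrow> (v, u) \<notin> D" using \<open>{u, v} \<in> E\<close> by (auto simp: D_def)
  qed (auto simp: D_def)
  moreover have "layered D lev (\<lambda>_. True)" by (auto simp: layered_def D_def)
  ultimately show thesis
    using that AT_orientation_if_layered orientation_subset_vertices[OF assms] finV by blast
qed

lemma paint_number_le_AT_number:
  assumes "simple_graph V E"
  shows "paint_number V E \<le> AT_number V E"
proof -
  obtain D where D: "orientation E D" "AT_orientation V D"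
    using AT_orientation_exists[OF assms] .
  have "finite V" using assms by (simp add: simple_graph_def)
  then have bound: "\<forall>v\<in>V. outdeg D v < Suc (\<Sum>v\<in>V. outdeg D v)"
    by (simp add: le_imp_less_Suc member_le_sum)
  have "\<exists>D. orientation E D \<and> AT_orientation V D \<and> (\<forall>v\<in>V. outdeg D v < AT_number V E)"
    unfolding AT_number_def
    by (rule LeastI_ex) (use D bound in blast)
  then have "f_paintable V E (\<lambda>_. AT_number V E)"
    using paintable_if_AT_orientation[OF assms] by blast
  then show ?thesis
    unfolding paint_number_def by (rule Least_le)
qed

lemma AT_number_le_outdeg_bound:
  assumes "orientation E D" "AT_orientation V D" "\<forall>v\<in>V. real (outdeg D v) \<le> b" "0 \<le> b"
  shows "real (AT_number V E) \<le> b + 1"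
proof -
  have "outdeg D v < nat \<lfloor>b\<rfloor> + 1" if "v \<in> V" for v
    using assms(3) that by (simp add: le_nat_floor less_Suc_eq_le)
  then have "AT_number V E \<le> nat \<lfloor>b\<rfloor> + 1"
    unfolding AT_number_def by (intro Least_le) (use assms(1,2) in blast)
  then show ?thesis using assms(4) by linarith
qed

section \<open>Balanced orientations\<close>

definition balanced_orientation :: "'a set \<Rightarrow> 'a set set \<Rightarrow> ('a \<times> 'a) set \<Rightarrow> bool" where
  "balanced_orientation V F B \<longleftrightarrow> orientation F B \<and> (\<forall>z\<in>V. 2 * outdeg B z \<le> degree V F z + 1)"

lemma balanced_orientation_if_no_cherry:
  assumes "simple_graph V F" "\<not> (\<exists>v a b. a \<noteq> b \<and> {v, a} \<in> F \<and> {v, b} \<in> F)"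
  shows "\<exists>B. balanced_orientation V F B"
proof -
  obtain B where B: "orientation F B" using AT_orientation_exists[OF assms(1)] by metis
  have deg: "degree V F z \<le> 1" for z
  proof -
    have "finite {u\<in>V. {u, z} \<in> F}" using assms(1) by (simp add: simple_graph_def)
    moreover have "\<forall>a\<in>{u\<in>V. {u, z} \<in> F}. \<forall>b\<in>{u\<in>V. {u, z} \<in> F}. a = b"
      using assms(2) by (metis (no_types, lifting) insert_commute mem_Collect_eq)
    ultimately show ?thesis by (simp add: degree_def card_le_Suc0_iff_eq)
  qed
  have "2 * outdeg B z \<le> degree V F z + 1" for z
    using outdeg_le_degree[OF assms(1) B, of z] deg[of z] by linarith
  then show ?thesis using B by (auto simp: balanced_orientation_def)
qed

text \<open>Reorient around a triangle \<open>v a b\<close>: the cycle \<open>b \<rightarrow> v \<rightarrow> a \<rightarrow> b\<close> gives each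
  of its vertices one out-arc and two more edges.\<close>
lemma balanced_orientation_triangle:
  assumes "simple_graph V F" "{v, a} \<in> F" "{v, b} \<in> F" "{a, b} \<in> F" "a \<noteq> b"
    and "balanced_orientation V (F - {{v, a}, {v, b}, {a, b}}) B"
  shows "\<exists>B. balanced_orientation V F B"
proof -
  define F0 where "F0 = F - {{v, a}, {v, b}, {a, b}}"
  have ne: "v \<noteq> a" "v \<noteq> b" and V: "v \<in> V" "a \<in> V" "b \<in> V"
    using simple_graph_edgeD[OF assms(1)] assms(2,3) by blast+
  have G0: "simple_graph V F0" "orientation F0 B"
    using simple_graph_subset[OF assms(1) Diff_subset] assms(6) by (auto simp: F0_def balanced_orientation_def)
  have "{b, v} \<notin> F0" by (auto simp: F0_def doubleton_eq_iff)
  note e1 = orientation_insert_edge[OF G0 V(3) V(1) ne(2)[symmetric] this]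
  have "{a, b} \<notin> insert {b, v} F0" using ne by (auto simp: F0_def doubleton_eq_iff)
  note e2 = orientation_insert_edge[OF e1(1,2) V(2,3) assms(5) this]
  have "{v, a} \<notin> insert {a, b} (insert {b, v} F0)" using ne assms(5) by (auto simp: F0_def doubleton_eq_iff)
  note e3 = orientation_insert_edge[OF e2(1,2) V(1,2) ne(1) this]
  have F: "insert {v, a} (insert {a, b} (insert {b, v} F0)) = F"
    using assms(2-4) insert_commute[of b v] by (auto simp: F0_def)
  have "degree V F z = degree V F0 z + (if z = v \<or> z = a \<or> z = b then 2 else 0)"
    and "outdeg (insert (v, a) (insert (a, b) (insert (b, v) B))) z
      = outdeg B z + (if z = v \<or> z = a \<or> z = b then 1 else 0)" for z
    unfolding F[symmetric] e1(3,4) e2(3,4) e3(3,4)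
    using ne assms(5) by (cases "z = v"; cases "z = a"; cases "z = b"; simp)+
  then have "2 * outdeg (insert (v, a) (insert (a, b) (insert (b, v) B))) z \<le> degree V F z + 1"
    if "z \<in> V" for z
    using assms(6) that by (simp add: F0_def balanced_orientation_def)
  then show ?thesis using e3(2) F by (auto simp: balanced_orientation_def)
qed

text \<open>Split off the path \<open>a - v - b\<close> through a vertex \<open>v\<close> by the single edge \<open>a b\<close>;
  if that edge is oriented \<open>x \<rightarrow> y\<close>, route it as \<open>x \<rightarrow> v \<rightarrow> y\<close>.\<close>
lemma balanced_orientation_cherry:
  assumes "simple_graph V F" "{v, a} \<in> F" "{v, b} \<in> F" "{a, b} \<notin> F" "a \<noteq> b"
    and bal: "balanced_orientation V (insert {a, b} (F - {{v, a}, {v, b}})) B'"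
  shows "\<exists>B. balanced_orientation V F B"
proof -
  define F0 where "F0 = F - {{v, a}, {v, b}}"
  have G0: "simple_graph V F0" using simple_graph_subset[OF assms(1) Diff_subset] by (simp add: F0_def)
  have B': "orientation (insert {a, b} F0) B'" using bal by (simp add: F0_def balanced_orientation_def)
  obtain x y where xy: "{x, y} = {a, b}" "(x, y) \<in> B'"
    using B' by (auto simp: orientation_def) (metis insert_commute)
  have "v \<noteq> a" "v \<noteq> b" "v \<in> V" "a \<in> V" "b \<in> V"
    using simple_graph_edgeD[OF assms(1)] assms(2,3) by blast+
  with xy(1) assms(5) have ne: "x \<noteq> y" "v \<noteq> x" "v \<noteq> y" and V: "v \<in> V" "x \<in> V" "y \<in> V"
    by (auto simp: doubleton_eq_iff)
  define B0 where "B0 = B' - {(x, y)}"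
  have "{x, y} \<notin> F0" using xy assms(4) by (simp add: F0_def)
  moreover have B0: "orientation F0 B0"
    using orientation_remove[OF B' xy(2)] xy(1) \<open>{x, y} \<notin> F0\<close> by (simp add: B0_def)
  moreover have "insert (x, y) B0 = B'" using xy(2) by (auto simp: B0_def)
  ultimately have e0: "degree V (insert {x, y} F0) z = degree V F0 z + (if z = x \<or> z = y then 1 else 0)"
    "outdeg B' z = outdeg B0 z + (if z = x then 1 else 0)" for z
    using orientation_insert_edge(3,4)[OF G0 B0 V(2,3) ne(1)] by metis+
  have "{v, y} \<notin> F0" using xy by (auto simp: F0_def doubleton_eq_iff)
  note e1 = orientation_insert_edge[OF G0 \<open>orientation F0 B0\<close> V(1,3) ne(3) this]
  have "{x, v} \<notin> insert {v, y} F0" using xy ne by (auto simp: F0_def doubleton_eq_iff)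
  note e2 = orientation_insert_edge[OF e1(1,2) V(2,1) ne(2)[symmetric] this]
  have F: "insert {x, v} (insert {v, y} F0) = F"
    using xy assms(2,3) insert_commute[of v a] insert_commute[of v b] by (auto simp: F0_def doubleton_eq_iff)
  have deg: "degree V F z = degree V (insert {x, y} F0) z + (if z = v then 2 else 0)"
    and out: "outdeg (insert (x, v) (insert (v, y) B0)) z = outdeg B' z + (if z = v then 1 else 0)" for z
    unfolding F[symmetric] e0 e1(3,4) e2(3,4)
    using ne by (cases "z = v"; cases "z = x"; cases "z = y"; simp)+
  have "2 * outdeg (insert (x, v) (insert (v, y) B0)) z \<le> degree V F z + 1" if "z \<in> V" for z
  proof -
    have "2 * outdeg B' z \<le> degree V (insert {x, y} F0) z + 1"
      using bal that xy(1) by (simp add: F0_def balanced_orientation_def)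
    then show ?thesis unfolding deg out by (cases "z = v") simp_all
  qed
  then show ?thesis using e2(2) F by (auto simp: balanced_orientation_def)
qed

lemma balanced_orientation_exists:
  assumes "simple_graph V F"
  shows "\<exists>B. balanced_orientation V F B"
  using assms
proof (induction "card F" arbitrary: F rule: less_induct)
  case less
  have finF: "finite F" using simple_graph_finite_edges[OF less.prems] .
  show ?case
  proof (cases "\<exists>v a b. a \<noteq> b \<and> {v, a} \<in> F \<and> {v, b} \<in> F")
    case False
    then show ?thesis using balanced_orientation_if_no_cherry[OF less.prems] by blast
  next
    case True
    then obtain v a b where cherry: "a \<noteq> b" "{v, a} \<in> F" "{v, b} \<in> F" by blast
    then have ne: "v \<noteq> a" "v \<noteq> b" and V: "a \<in> V" "b \<in> V"
      using simple_graph_edgeD[OF less.prems] by blast+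
    have two: "card {{v, a}, {v, b}} = 2" using ne cherry(1) by (simp add: doubleton_eq_iff)
    show ?thesis
    proof (cases "{a, b} \<in> F")
      case True
      let ?F' = "F - {{v, a}, {v, b}, {a, b}}"
      have "card ?F' < card F" using finF cherry by (intro psubset_card_mono) auto
      moreover have "simple_graph V ?F'" using simple_graph_subset[OF less.prems Diff_subset] .
      ultimately obtain B where "balanced_orientation V ?F' B" using less.hyps by blast
      then show ?thesis
        using balanced_orientation_triangle[OF less.prems cherry(2,3) True cherry(1)] by blast
    next
      case False
      let ?F0 = "F - {{v, a}, {v, b}}"
      have "card ?F0 + 2 = card F"
        using finF cherry two card_Diff_subset[of "{{v, a}, {v, b}}" F] card_mono[OF finF, of "{{v, a}, {v, b}}"]
        by simp
      then have "card (insert {a, b} ?F0) < card F"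
        using finF by (simp add: card_insert_if)
      moreover have "simple_graph V (insert {a, b} ?F0)"
        using simple_graph_insert_edge[OF simple_graph_subset[OF less.prems Diff_subset] V cherry(1)] .
      ultimately obtain B where "balanced_orientation V (insert {a, b} ?F0) B" using less.hyps by blast
      then show ?thesis
        using balanced_orientation_cherry[OF less.prems cherry(2,3) False cherry(1)] by blast
    qed
  qed
qed

section \<open>Dense pairs of color classes\<close>

lemma sum_degree_remove:
  assumes "finite P" "v \<in> P" "{v} \<notin> E"
  shows "(\<Sum>u\<in>P. degree P E u) = (\<Sum>u\<in>P - {v}. degree (P - {v}) E u) + 2 * degree P E v"
proof -
  have "degree P E u = degree (P - {v}) E u + (if {v, u} \<in> E then 1 else 0)" if "u \<in> P - {v}" for u
  proof (cases "{v, u} \<in> E")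
    case True
    then have "{w\<in>P. {w, u} \<in> E} = insert v {w\<in>P - {v}. {w, u} \<in> E}" using assms(2) by auto
    then show ?thesis using True assms(1) by (simp add: degree_def)
  next
    case False
    then have "{w\<in>P. {w, u} \<in> E} = {w\<in>P - {v}. {w, u} \<in> E}" by auto
    then show ?thesis using False by (simp add: degree_def)
  qed
  then have "(\<Sum>u\<in>P - {v}. degree P E u)
      = (\<Sum>u\<in>P - {v}. degree (P - {v}) E u) + (\<Sum>u\<in>P - {v}. if {v, u} \<in> E then 1 else 0)"
    by (simp add: sum.distrib)
  also have "(\<Sum>u\<in>P - {v}. if {v, u} \<in> E then 1 else 0) = degree P E v"
  proof -
    have "{u\<in>P. {u, v} \<in> E} = {u\<in>P - {v}. {v, u} \<in> E}"
      using assms(3) by (auto simp: insert_commute)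
    then have "degree P E v = card {u\<in>P - {v}. {v, u} \<in> E}" by (simp add: degree_def)
    then show ?thesis using assms(1) by (simp only: card_filter_eq_sum finite_Diff)
  qed
  finally show ?thesis using assms(1,2) by (simp add: sum.remove)
qed

text \<open>Each edge leaves together with an endpoint of degree below \<open>g\<close>, and the degree sum counts
  it twice.\<close>
lemma sum_degree_less_if_degenerate:
  fixes g :: "'a \<Rightarrow> real"
  assumes "finite P" "P \<noteq> {}" "\<forall>u. {u} \<notin> E"
    and "\<forall>Q\<subseteq>P. Q \<noteq> {} \<longrightarrow> (\<exists>v\<in>Q. real (degree Q E v) < g v)"
  shows "(\<Sum>u\<in>P. real (degree P E u)) < 2 * (\<Sum>u\<in>P. g u)"
  using assms
proof (induction "card P" arbitrary: P rule: less_induct)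
  case less
  obtain v where v: "v \<in> P" "real (degree P E v) < g v" using less.prems(2,4) by blast
  have "(\<Sum>u\<in>P. real (degree P E u)) = (\<Sum>u\<in>P - {v}. real (degree (P - {v}) E u)) + 2 * real (degree P E v)"
    using sum_degree_remove[OF less.prems(1) v(1)] less.prems(3) by (simp flip: of_nat_sum)
  moreover have "(\<Sum>u\<in>P. g u) = g v + (\<Sum>u\<in>P - {v}. g u)"
    using less.prems(1) v(1) by (simp add: sum.remove)
  moreover have "(\<Sum>u\<in>P - {v}. real (degree (P - {v}) E u)) \<le> 2 * (\<Sum>u\<in>P - {v}. g u)"
  proof (cases "P - {v} = {}")
    case True
    show ?thesis unfolding True by simp
  next
    case False
    have "card (P - {v}) < card P" using less.prems(1) v(1) by (rule card_Diff1_less)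
    moreover have "\<forall>Q\<subseteq>P - {v}. Q \<noteq> {} \<longrightarrow> (\<exists>v\<in>Q. real (degree Q E v) < g v)"
      using less.prems(4) by blast
    ultimately show ?thesis using less.hyps less.prems(1,3) False by (simp add: less_imp_le)
  qed
  ultimately show ?case using v(2) by argo
qed

definition color_pair :: "('a \<Rightarrow> nat) \<Rightarrow> 'a set \<Rightarrow> nat \<Rightarrow> nat \<Rightarrow> 'a set" where
  "color_pair col U i j = {v\<in>U. col v = i \<or> col v = j}"

lemma count_pairs_containing:
  fixes a r :: nat
  assumes "a < r"
  shows "(\<Sum>i<r. \<Sum>j<r. if a = i \<or> a = j then 1 else 0) = 2 * real r - 1"
proof -
  have "(\<Sum>j<r. if a = i \<or> a = j then 1 else 0) = (if i = a then real r else 1)" if "i < r" for i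
    using assms by (cases "i = a") (simp_all add: sum.If_cases)
  then have "(\<Sum>i<r. \<Sum>j<r. if a = i \<or> a = j then 1 else 0) = (\<Sum>i<r. (if i = a then real r - 1 else 0) + 1)"
    by (intro sum.cong) auto
  also have "\<dots> = 2 * real r - 1" using assms by (simp add: sum.distrib)
  finally show ?thesis .
qed

lemma count_pairs_containing_both:
  fixes a b r :: nat
  assumes "a < r" "b < r" "a \<noteq> b"
  shows "(\<Sum>i<r. \<Sum>j<r. if (a = i \<or> a = j) \<and> (b = i \<or> b = j) then 1 else 0) = (2::real)"
proof -
  have "(\<Sum>j<r. if (a = i \<or> a = j) \<and> (b = i \<or> b = j) then 1 else 0)
      = (if i = a then 1 else 0) + (if i = b then (1::real) else 0)" for i
    using assms by (cases "i = a"; cases "i = b") (auto simp: sum.If_cases)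
  then show ?thesis using assms by (simp add: sum.distrib)
qed

lemma sum_color_pair:
  assumes "finite U"
  shows "(\<Sum>v\<in>color_pair col U i j. h v) = (\<Sum>v\<in>U. if col v = i \<or> col v = j then h v else 0)"
  unfolding color_pair_def using assms by (rule sum.inter_filter)

lemma sum_color_pairs_weight:
  fixes h :: "'a \<Rightarrow> real"
  assumes "finite U" "\<forall>v\<in>U. col v < r"
  shows "(\<Sum>i<r. \<Sum>j<r. \<Sum>v\<in>color_pair col U i j. h v) = (2 * real r - 1) * (\<Sum>v\<in>U. h v)"
proof -
  have "(\<Sum>i<r. \<Sum>j<r. \<Sum>v\<in>color_pair col U i j. h v)
      = (\<Sum>i<r. \<Sum>v\<in>U. \<Sum>j<r. if col v = i \<or> col v = j then h v else 0)"
    unfolding sum_color_pair[OF assms(1)] by (intro sum.cong refl) (rule sum.swap)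
  also have "\<dots> = (\<Sum>v\<in>U. \<Sum>i<r. \<Sum>j<r. if col v = i \<or> col v = j then h v else 0)"
    by (rule sum.swap)
  also have "\<dots> = (\<Sum>v\<in>U. (2 * real r - 1) * h v)"
  proof (intro sum.cong refl)
    fix v assume "v \<in> U"
    have "(\<Sum>i<r. \<Sum>j<r. if col v = i \<or> col v = j then h v else 0)
        = h v * (\<Sum>i<r. \<Sum>j<r. if col v = i \<or> col v = j then 1 else 0)"
      by (simp add: sum_distrib_left if_distrib cong: if_cong)
    then show "(\<Sum>i<r. \<Sum>j<r. if col v = i \<or> col v = j then h v else 0) = (2 * real r - 1) * h v"
      using count_pairs_containing[of "col v" r] assms(2) \<open>v \<in> U\<close> by simp
  qed
  finally show ?thesis by (simp add: sum_distrib_left)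
qed

lemma sum_swap_outer_inner:
  "(\<Sum>i\<in>A. \<Sum>j\<in>B. \<Sum>v\<in>C. \<Sum>w\<in>D. f i j v w) = (\<Sum>v\<in>C. \<Sum>w\<in>D. \<Sum>i\<in>A. \<Sum>j\<in>B. f i j v w)"
proof -
  have "(\<Sum>i\<in>A. \<Sum>j\<in>B. \<Sum>v\<in>C. \<Sum>w\<in>D. f i j v w) = (\<Sum>i\<in>A. \<Sum>v\<in>C. \<Sum>w\<in>D. \<Sum>j\<in>B. f i j v w)"
    by (intro sum.cong refl) (simp add: sum.swap[of _ B] sum.swap[of _ B C])
  also have "\<dots> = (\<Sum>v\<in>C. \<Sum>w\<in>D. \<Sum>i\<in>A. \<Sum>j\<in>B. f i j v w)"
    by (simp add: sum.swap[of _ A] sum.swap[of _ A C])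
  finally show ?thesis .
qed

lemma sum_color_pairs_degree:
  assumes "finite U" "\<forall>v\<in>U. col v < r" "\<forall>u v. {u, v} \<in> E \<longrightarrow> col u \<noteq> col v"
  shows "(\<Sum>i<r. \<Sum>j<r. \<Sum>v\<in>color_pair col U i j. real (degree (color_pair col U i j) E v))
    = 2 * (\<Sum>v\<in>U. real (degree U E v))"
proof -
  let ?in = "\<lambda>i j v. col v = i \<or> col v = j"
  have degree_pair: "real (degree (color_pair col U i j) E v) = (\<Sum>w\<in>U. if ?in i j w \<and> {w, v} \<in> E then 1 else 0)"
    for i j v
  proof -
    have "{w\<in>color_pair col U i j. {w, v} \<in> E} = {w\<in>U. ?in i j w \<and> {w, v} \<in> E}"
      by (auto simp: color_pair_def)
    then show ?thesis using assms(1) by (simp add: degree_def card_filter_eq_sum of_nat_sum if_distrib cong: if_cong)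
  qed
  have if_sum: "(if P then \<Sum>w\<in>U. f w else 0) = (\<Sum>w\<in>U. if P then f w else 0)"
    for P and f :: "'a \<Rightarrow> real" by simp
  have "(\<Sum>i<r. \<Sum>j<r. \<Sum>v\<in>color_pair col U i j. real (degree (color_pair col U i j) E v))
      = (\<Sum>i<r. \<Sum>j<r. \<Sum>v\<in>U. \<Sum>w\<in>U. if ?in i j v \<and> ?in i j w \<and> {w, v} \<in> E then 1 else (0::real))"
    unfolding sum_color_pair[OF assms(1)] degree_pair if_sum by (intro sum.cong refl) simp
  also have "\<dots> = (\<Sum>v\<in>U. \<Sum>w\<in>U. \<Sum>i<r. \<Sum>j<r. if ?in i j v \<and> ?in i j w \<and> {w, v} \<in> E then 1 else (0::real))"
    by (rule sum_swap_outer_inner)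
  also have "\<dots> = (\<Sum>v\<in>U. \<Sum>w\<in>U. if {w, v} \<in> E then 2 else 0)"
  proof (intro sum.cong refl)
    fix v w assume "v \<in> U" "w \<in> U"
    show "(\<Sum>i<r. \<Sum>j<r. if ?in i j v \<and> ?in i j w \<and> {w, v} \<in> E then 1 else (0::real))
        = (if {w, v} \<in> E then 2 else 0)"
    proof (cases "{w, v} \<in> E")
      case True
      then have "col v \<noteq> col w" using assms(3) by metis
      then show ?thesis
        using True count_pairs_containing_both[of "col v" r "col w"] assms(2) \<open>v \<in> U\<close> \<open>w \<in> U\<close>
        by simp
    qed simp
  qed
  also have "\<dots> = (\<Sum>v\<in>U. 2 * real (degree U E v))"
  proof (intro sum.cong refl)
    fix v
    have "real (degree U E v) = (\<Sum>w\<in>U. if {w, v} \<in> E then 1 else 0)"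
      using assms(1) by (simp add: degree_def card_filter_eq_sum of_nat_sum if_distrib cong: if_cong)
    then show "(\<Sum>w\<in>U. if {w, v} \<in> E then 2 else 0) = 2 * real (degree U E v)"
      by (simp add: sum_distrib_left if_distrib cong: if_cong)
  qed
  finally show ?thesis by (simp add: sum_distrib_left)
qed

lemma dense_color_pair_exists:
  fixes g :: "'a \<Rightarrow> real"
  assumes "finite U" "U \<noteq> {}" "\<forall>u. {u} \<notin> E" "\<forall>u v. {u, v} \<in> E \<longrightarrow> col u \<noteq> col v"
    and "\<forall>v\<in>U. col v < r" and weight: "\<forall>v\<in>U. (2 * real r - 1) * g v \<le> real (degree U E v)"
  shows "\<exists>i j. \<exists>P\<subseteq>color_pair col U i j. P \<noteq> {} \<and> (\<forall>v\<in>P. g v \<le> real (degree P E v))"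
proof (rule ccontr)
  let ?H = "color_pair col U"
  let ?deg = "\<lambda>i j. \<Sum>v\<in>?H i j. real (degree (?H i j) E v)"
  let ?wt = "\<lambda>i j. 2 * (\<Sum>v\<in>?H i j. g v)"
  assume "\<not> ?thesis"
  then have sparse: "\<forall>Q\<subseteq>?H i j. Q \<noteq> {} \<longrightarrow> (\<exists>v\<in>Q. real (degree Q E v) < g v)" for i j
    by (auto simp: not_le)
  have fin: "finite (?H i j)" for i j using assms(1) by (simp add: color_pair_def)
  have le: "?deg i j \<le> ?wt i j" for i j
  proof (cases "?H i j = {}")
    case False
    then show ?thesis using sum_degree_less_if_degenerate[OF fin False assms(3) sparse] by simp
  qed simp
  obtain v0 where "v0 \<in> U" using assms(2) by blast
  then have v0: "col v0 < r" "?H (col v0) (col v0) \<noteq> {}" using assms(5) by (auto simp: color_pair_def)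
  then have "?deg (col v0) (col v0) < ?wt (col v0) (col v0)"
    using sum_degree_less_if_degenerate[OF fin _ assms(3) sparse] by blast
  then have "(\<Sum>j<r. ?deg (col v0) j) < (\<Sum>j<r. ?wt (col v0) j)"
    using le v0(1) by (intro sum_strict_mono_ex1) auto
  then have "(\<Sum>i<r. \<Sum>j<r. ?deg i j) < (\<Sum>i<r. \<Sum>j<r. ?wt i j)"
    using le v0(1) by (intro sum_strict_mono_ex1) (auto intro: sum_mono)
  also have "\<dots> = 2 * ((2 * real r - 1) * (\<Sum>v\<in>U. g v))"
    using sum_color_pairs_weight[OF assms(1,5)] by (simp add: sum_distrib_left[symmetric])
  also have "\<dots> \<le> 2 * (\<Sum>v\<in>U. real (degree U E v))"
    using weight by (simp add: sum_distrib_left sum_mono)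
  also have "\<dots> = (\<Sum>i<r. \<Sum>j<r. ?deg i j)"
    using sum_color_pairs_degree[OF assms(1,5,4)] by simp
  finally show False by simp
qed

section \<open>Peeling off dense pairs of color classes\<close>

definition cross_edges :: "'a set set \<Rightarrow> 'a set \<Rightarrow> 'a set \<Rightarrow> 'a set set" where
  "cross_edges E P U = {{p, u} | p u. p \<in> P \<and> u \<in> U \<and> {p, u} \<in> E}"

definition cross_arcs :: "'a set set \<Rightarrow> 'a set \<Rightarrow> 'a set \<Rightarrow> ('a \<times> 'a) set" where
  "cross_arcs E P U = {(p, u). p \<in> P \<and> u \<in> U \<and> {p, u} \<in> E}"

lemma orientation_cross_arcs:
  assumes "P \<inter> U = {}"
  shows "orientation (cross_edges E P U) (cross_arcs E P U)"
  unfolding orientation_def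
proof (intro conjI allI impI ballI)
  fix a b assume "{a, b} \<in> cross_edges E P U"
  then obtain p u where "{a, b} = {p, u}" "p \<in> P" "u \<in> U" "{p, u} \<in> E"
    by (auto simp: cross_edges_def)
  then show "(a, b) \<in> cross_arcs E P U \<longleftrightarrow> (b, a) \<notin> cross_arcs E P U"
    using assms insert_commute[of u p] by (auto simp: cross_arcs_def doubleton_eq_iff)
qed (auto simp: cross_edges_def cross_arcs_def)

lemma induced_edges_split:
  assumes "simple_graph V E" "P \<inter> U = {}"
  shows "{e\<in>E. e \<subseteq> P \<union> U} = ({e\<in>E. e \<subseteq> U} \<union> {e\<in>E. e \<subseteq> P}) \<union> cross_edges E P U"
    and "{e\<in>E. e \<subseteq> U} \<inter> {e\<in>E. e \<subseteq> P} = {}"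
    and "({e\<in>E. e \<subseteq> U} \<union> {e\<in>E. e \<subseteq> P}) \<inter> cross_edges E P U = {}"
proof -
  show "{e\<in>E. e \<subseteq> P \<union> U} = ({e\<in>E. e \<subseteq> U} \<union> {e\<in>E. e \<subseteq> P}) \<union> cross_edges E P U"
  proof (intro equalityI subsetI)
    fix e assume e: "e \<in> {e\<in>E. e \<subseteq> P \<union> U}"
    then have "e \<in> E" by simp
    then obtain a b where ab: "e = {a, b}" using simple_graph_edgeE[OF assms(1)] by metis
    with e consider "a \<in> P" "b \<in> P" | "a \<in> U" "b \<in> U" | "a \<in> P" "b \<in> U" | "a \<in> U" "b \<in> P"
      by blast
    then show "e \<in> ({e\<in>E. e \<subseteq> U} \<union> {e\<in>E. e \<subseteq> P}) \<union> cross_edges E P U"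
    proof cases
      case 3
      then show ?thesis using e ab unfolding cross_edges_def by blast
    next
      case 4
      moreover have "e = {b, a}" using ab by (simp add: insert_commute)
      ultimately show ?thesis using e unfolding cross_edges_def by blast
    qed (use e ab in auto)
  qed (auto simp: cross_edges_def)
  show "{e\<in>E. e \<subseteq> U} \<inter> {e\<in>E. e \<subseteq> P} = {}"
  proof (rule equals0I)
    fix e assume "e \<in> {e\<in>E. e \<subseteq> U} \<inter> {e\<in>E. e \<subseteq> P}"
    then have "e \<in> E" "e \<subseteq> U" "e \<subseteq> P" by auto
    moreover obtain u v where "e = {u, v}" using simple_graph_edgeE[OF assms(1) \<open>e \<in> E\<close>] by metis
    ultimately show False using assms(2) by blast
  qed
  show "({e\<in>E. e \<subseteq> U} \<union> {e\<in>E. e \<subseteq> P}) \<inter> cross_edges E P U = {}"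
    using assms(2) by (auto simp: cross_edges_def)
qed

lemma orientation_peel:
  assumes "simple_graph V E" "P \<inter> U = {}" "orientation {e\<in>E. e \<subseteq> U} D'" "orientation {e\<in>E. e \<subseteq> P} B"
  shows "orientation {e\<in>E. e \<subseteq> P \<union> U} (D' \<union> B \<union> cross_arcs E P U)"
  using orientation_Un[OF orientation_Un[OF assms(3,4) induced_edges_split(2)[OF assms(1,2)]]
      orientation_cross_arcs[OF assms(2)] induced_edges_split(3)[OF assms(1,2)]]
  unfolding induced_edges_split(1)[OF assms(1,2)] .

lemma color_pair_sides:
  assumes "\<forall>u v. {u, v} \<in> E \<longrightarrow> col u \<noteq> col v" "{a, b} \<in> E"
    and "a \<in> color_pair col U i j" "b \<in> color_pair col U i j"
  shows "(col a = i) \<noteq> (col b = i)"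
  using assms(1)[rule_format, OF assms(2)] assms(3,4) by (auto simp: color_pair_def)

lemma layered_peel:
  assumes "layered D' lev side" "D' \<subseteq> U \<times> U" "P \<inter> U = {}"
    and "\<forall>(a, b)\<in>B. a \<in> P \<and> b \<in> P \<and> side' a \<noteq> side' b"
  shows "layered (D' \<union> B \<union> cross_arcs E P U)
    (\<lambda>v. if v \<in> P then 0 else Suc (lev v)) (\<lambda>v. if v \<in> P then side' v else side v)"
proof -
  let ?lev = "\<lambda>v. if v \<in> P then 0 else Suc (lev v)"
  let ?side = "\<lambda>v. if v \<in> P then side' v else side v"
  have "?lev a < ?lev b \<or> (?lev a = ?lev b \<and> ?side a \<noteq> ?side b)"
    if ab: "(a, b) \<in> D' \<union> B \<union> cross_arcs E P U" for a b
  proof -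
    consider "(a, b) \<in> D'" | "(a, b) \<in> B" | "(a, b) \<in> cross_arcs E P U" using ab by blast
    then show ?thesis
    proof cases
      case 1
      then have "a \<notin> P" "b \<notin> P" using assms(2,3) by auto
      then show ?thesis using 1 assms(1) by (auto simp: layered_def)
    next
      case 2
      then show ?thesis using assms(4) by auto
    next
      case 3
      then show ?thesis using assms(3) by (auto simp: cross_arcs_def)
    qed
  qed
  then show ?thesis unfolding layered_def by blast
qed

lemma outdeg_peel:
  assumes "D' \<subseteq> U \<times> U" "B \<subseteq> P \<times> P" "P \<inter> U = {}" "finite B" "finite U"
  shows "v \<in> U \<Longrightarrow> outdeg (D' \<union> B \<union> cross_arcs E P U) v = outdeg D' v"
    and "v \<in> P \<Longrightarrow> outdeg (D' \<union> B \<union> cross_arcs E P U) v = outdeg B v + degree U E v"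
proof -
  assume "v \<in> U"
  then have "{u. (v, u) \<in> D' \<union> B \<union> cross_arcs E P U} = {u. (v, u) \<in> D'}"
    using assms(2,3) by (auto simp: cross_arcs_def)
  then show "outdeg (D' \<union> B \<union> cross_arcs E P U) v = outdeg D' v" by (simp add: outdeg_def)
next
  assume "v \<in> P"
  then have "{u. (v, u) \<in> D' \<union> B \<union> cross_arcs E P U} = {u. (v, u) \<in> B} \<union> {u\<in>U. {u, v} \<in> E}"
    using assms(1,3) by (auto simp: cross_arcs_def insert_commute)
  moreover have "finite {u. (v, u) \<in> B}" using assms(4) by (rule finite_surj[where f = snd]) force
  moreover have "{u. (v, u) \<in> B} \<inter> {u\<in>U. {u, v} \<in> E} = {}" using assms(2,3) \<open>v \<in> P\<close> by auto
  ultimately show "outdeg (D' \<union> B \<union> cross_arcs E P U) v = outdeg B v + degree U E v"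
    using assms(5) by (simp add: outdeg_def degree_def card_Un_disjoint)
qed

lemma peel_step:
  assumes simple: "simple_graph V E" and proper: "\<forall>u v. {u, v} \<in> E \<longrightarrow> col u \<noteq> col v"
    and "U \<subseteq> V" and P: "P \<subseteq> color_pair col U i j"
    and dense: "\<forall>v\<in>P. 2 * (real (degree U E v) - c) - 1 \<le> real (degree P E v)"
    and D': "orientation {e\<in>E. e \<subseteq> U - P} D'" "layered D' lev side" "\<forall>v\<in>U - P. real (outdeg D' v) \<le> c + 1"
  shows "\<exists>D lev side. orientation {e\<in>E. e \<subseteq> U} D \<and> layered D lev side \<and> (\<forall>v\<in>U. real (outdeg D v) \<le> c + 1)"
proof -
  define U' where "U' = U - P"
  have PU: "P \<subseteq> U" "P \<inter> U' = {}" "U = P \<union> U'" using P by (auto simp: color_pair_def U'_def)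
  have "finite U" using simple \<open>U \<subseteq> V\<close> finite_subset unfolding simple_graph_def by blast
  then have fin: "finite P" "finite U'" using PU(1) by (auto simp: U'_def intro: finite_subset)
  have "simple_graph P {e\<in>E. e \<subseteq> P}"
    using simple_graph_induced[OF simple] PU(1) \<open>U \<subseteq> V\<close> by (meson subset_trans)
  then obtain B where B: "balanced_orientation P {e\<in>E. e \<subseteq> P} B"
    using balanced_orientation_exists by blast
  then have B_orient: "orientation {e\<in>E. e \<subseteq> P} B" by (simp add: balanced_orientation_def)
  then have BP: "B \<subseteq> P \<times> P" by (rule orientation_induced_subset)
  have D'U: "D' \<subseteq> U' \<times> U'" using orientation_induced_subset[OF D'(1)] by (simp add: U'_def)
  define D where "D = D' \<union> B \<union> cross_arcs E P U'"
  have orient: "orientation {e\<in>E. e \<subseteq> U} D"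
    using orientation_peel[OF simple PU(2) D'(1)[folded U'_def] B_orient] PU(3) by (simp add: D_def)
  have "\<forall>(a, b)\<in>B. a \<in> P \<and> b \<in> P \<and> (col a = i) \<noteq> (col b = i)"
    using B_orient BP P color_pair_sides[OF proper] by (fastforce simp: orientation_def)
  then have layer: "layered D (\<lambda>v. if v \<in> P then 0 else Suc (lev v)) (\<lambda>v. if v \<in> P then col v = i else side v)"
    unfolding D_def by (rule layered_peel[OF D'(2) D'U PU(2)])
  have finB: "finite B" using BP fin(1) by (meson finite_SigmaI finite_subset)
  have bound: "real (outdeg D v) \<le> c + 1" if "v \<in> U" for v
  proof (cases "v \<in> P")
    case False
    then have "v \<in> U'" using that by (simp add: U'_def)
    then show ?thesis using D'(3) outdeg_peel(1)[OF D'U BP PU(2) finB fin(2)] by (simp add: D_def U'_def)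
  next
    case True
    have "outdeg D v = outdeg B v + degree U' E v"
      unfolding D_def by (rule outdeg_peel(2)[OF D'U BP PU(2) finB fin(2) True])
    moreover have "2 * outdeg B v \<le> degree P {e\<in>E. e \<subseteq> P} v + 1"
      using B True by (simp add: balanced_orientation_def)
    then have "2 * outdeg B v \<le> degree P E v + 1" by (simp only: degree_induced[OF True])
    moreover have "degree U E v = degree P E v + degree U' E v"
      using degree_Un[OF PU(2) fin] PU(3) by simp
    ultimately have "2 * outdeg D v + degree P E v \<le> 2 * degree U E v + 1" by linarith
    then have "2 * real (outdeg D v) + real (degree P E v) \<le> 2 * real (degree U E v) + 1"
      by (metis (mono_tags) of_nat_add of_nat_le_iff of_nat_mult of_nat_numeral of_nat_1)
    moreover have "2 * (real (degree U E v) - c) - 1 \<le> real (degree P E v)" using dense True by blast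
    ultimately show ?thesis by argo
  qed
  show ?thesis using orient layer bound by blast
qed

lemma layered_orientation_exists:
  assumes simple: "simple_graph V E" and proper: "\<forall>u v. {u, v} \<in> E \<longrightarrow> col u \<noteq> col v"
    and colors: "\<forall>v\<in>V. col v < r" and "max_degree_le V E d"
    and weight: "\<forall>x::nat. x \<le> d \<longrightarrow> (2 * real r - 1) * (2 * (real x - c) - 1) \<le> real x"
  shows "U \<subseteq> V \<Longrightarrow> \<exists>D lev side. orientation {e\<in>E. e \<subseteq> U} D \<and> layered D lev side
    \<and> (\<forall>v\<in>U. real (outdeg D v) \<le> c + 1)"
proof (induction "card U" arbitrary: U rule: less_induct)
  case less
  have finV: "finite V" using simple by (simp add: simple_graph_def)
  then have finU: "finite U" using less.prems by (rule finite_subset[rotated])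
  show ?case
  proof (cases "U = {}")
    case True
    moreover have "{} \<notin> E" using simple by (auto simp: simple_graph_def)
    ultimately have "{e\<in>E. e \<subseteq> U} = {}" by auto
    then have "orientation {e\<in>E. e \<subseteq> U} {}" "layered {} (\<lambda>_. 0) (\<lambda>_. True)"
      by (auto simp: orientation_def layered_def)
    then show ?thesis using True by blast
  next
    case False
    have "degree U E v \<le> d" if "v \<in> U" for v
    proof -
      have "degree V E v \<le> d" using \<open>max_degree_le V E d\<close> that less.prems by (auto simp: max_degree_le_def)
      then show ?thesis by (rule le_trans[OF degree_mono[OF less.prems finV]])
    qed
    then have "\<forall>v\<in>U. (2 * real r - 1) * (2 * (real (degree U E v) - c) - 1) \<le> real (degree U E v)"
      using weight by blast
    moreover have "\<forall>v\<in>U. col v < r" using colors less.prems by blast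
    ultimately have "\<exists>i j. \<exists>P\<subseteq>color_pair col U i j. P \<noteq> {}
        \<and> (\<forall>v\<in>P. 2 * (real (degree U E v) - c) - 1 \<le> real (degree P E v))"
      using simple_graph_no_loops[OF simple] by (intro dense_color_pair_exists[OF finU False _ proper]) auto
    then obtain i j P where P: "P \<subseteq> color_pair col U i j" "P \<noteq> {}"
      and dense: "\<forall>v\<in>P. 2 * (real (degree U E v) - c) - 1 \<le> real (degree P E v)"
      by blast
    have "P \<subseteq> U" using P(1) by (auto simp: color_pair_def)
    then have "card (U - P) < card U" using P(2) finU by (intro psubset_card_mono) auto
    then obtain D' lev side where "orientation {e\<in>E. e \<subseteq> U - P} D'" "layered D' lev side"
      "\<forall>v\<in>U - P. real (outdeg D' v) \<le> c + 1"
      using less.hyps less.prems by (meson Diff_subset subset_trans)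
    then show ?thesis using peel_step[OF simple proper less.prems P(1) dense] by blast
  qed
qed

lemma density_inequality:
  fixes r d x :: nat
  assumes "r \<ge> 2" "x \<le> d"
  shows "(2 * real r - 1) * (2 * (real x - (1 - 1 / (4 * real r + 1)) * real d) - 1) \<le> real x"
proof -
  define q where "q = real d / (4 * real r + 1)"
  have r: "real r \<ge> 2" using assms(1) by simp
  have q: "q \<ge> 0" "real d = (4 * real r + 1) * q" using r by (simp_all add: q_def)
  have c: "(1 - 1 / (4 * real r + 1)) * real d = real d - q" using r by (simp add: q_def field_simps)
  have "(4 * real r - 3) * real x \<le> (4 * real r - 3) * real d"
    using assms(2) r by (intro mult_left_mono) auto
  then show ?thesis unfolding c using q r by (simp add: algebra_simps)
qed

theorem theorem1p2:
  fixes V :: "'a set" and E :: "'a set set" and d r :: nat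
  assumes "r \<ge> 2"
    and "simple_graph V E"
    and "max_degree_le V E d"
    and "chromatic_number V E \<le> r"
  shows "paint_number V E \<le> AT_number V E
    \<and> real (AT_number V E) \<le> (1 - 1 / (4 * real r + 1)) * real d + 2"
proof -
  obtain col where col: "\<forall>v\<in>V. col v < chromatic_number V E" "\<forall>u v. {u, v} \<in> E \<longrightarrow> col u \<noteq> col v"
    using proper_coloring_exists[OF assms(2)] .
  define c where "c = (1 - 1 / (4 * real r + 1)) * real d"
  have "\<forall>x::nat. x \<le> d \<longrightarrow> (2 * real r - 1) * (2 * (real x - c) - 1) \<le> real x"
    using density_inequality[OF assms(1)] by (simp add: c_def)
  moreover have "\<forall>v\<in>V. col v < r" using col(1) assms(4) by (meson less_le_trans)
  ultimately obtain D lev side where D: "orientation {e\<in>E. e \<subseteq> V} D" "layered D lev side"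
    "\<forall>v\<in>V. real (outdeg D v) \<le> c + 1"
    using layered_orientation_exists[OF assms(2) col(2) _ assms(3), of r c V] by blast
  have "{e\<in>E. e \<subseteq> V} = E" using assms(2) by (auto simp: simple_graph_def)
  then have orient: "orientation E D" using D(1) by simp
  have "finite V" using assms(2) by (simp add: simple_graph_def)
  then have "AT_orientation V D"
    using AT_orientation_if_layered[OF D(2) orientation_subset_vertices[OF assms(2) orient]] by blast
  moreover have "0 \<le> c + 1" using assms(1) by (simp add: c_def)
  ultimately have "real (AT_number V E) \<le> c + 2"
    using AT_number_le_outdeg_bound[OF orient _ D(3)] by simp
  then show ?thesis using paint_number_le_AT_number[OF assms(2)] by (simp add: c_def)
qed

end
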